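(* Let $\mathcal E$ be a nonlinear Dirichlet form on $L^2(\mu)$ satisfying the weak $\Delta_2$-condition. The following are equivalent: (i) $\mathcal E$ is critical; (ii) $1\in M(\mathcal E_e)$ and $\|1\|_{L_e}=0$; (iii) there exists a sequence $(e_n)$ in $M(\mathcal E)$ with $0\le e_n\le1$, $e_n\to1$ locally in measure and $\|e_n\|_L\to0$.
   Context: $(X,\mathfrak A,\mu)$ is $\sigma$-finite; $L^0(\mu)$ carries local convergence in measure. A nonlinear Dirichlet form is a lower semicontinuous convex $\mathcal E\colon L^2(\mu)\to[0,\infty]$ with $\mathcal E(-f)=\mathcal E(f)$, $\mathcal E(0)=0$, such that $\mathcal E(f+Cg)+\mathcal E(f-Cg)\le\mathcal E(f+g)+\mathcal E(f-g)$ for all $f,g$ and all 1-Lipschitz $C\colon\mathbb R\to\mathbb R$ with $C(0)=0$. Weak $\Delta_2$-condition: $\mathcal E(f_n)\to0$ implies $\mathcal E(2f_n)\to0$. $M(\mathcal E)$, $\|\cdot\|_L$: modular space $\{f:\lim_{\lambda\to0+}\mathcal E(\lambda f)=0\}$ and Luxemburg seminorm $\inf\{\lambda>0:\mathcal E(\lambda^{-1}f)\le1\}$; $\mathcal E_e$ is the lower semicontinuous relaxation on $L^0(\mu)$ of $\mathcal E$ extended by $+\infty$, with $M(\mathcal E_e)$, $\|\cdot\|_{L_e}$ analogous. Resolvent $G_\alpha f$ minimizes $g\mapsto\mathcal E(g)+\frac\alpha2\|g-\alpha^{-1}f\|_2^2$, extended to nonnegative functions by monotone limits; Green operator $Gf=\lim_{\alpha\to0+}G_\alpha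 f$. $\mathcal E$ is critical if for every $f\in L^1_+(\mu)$ one has $\mu(\{f>0\}\cap\{Gf<\infty\})=0$. *)

theory Defs
  imports "HOL-Analysis.Analysis"
begin

definition L2 :: "'a measure \<Rightarrow> ('a \<Rightarrow> real) \<Rightarrow> bool" where
  "L2 M f \<longleftrightarrow> f \<in> borel_measurable M \<and> integrable M (\<lambda>x. (f x)\<^sup>2)"

definition conv_loc_meas :: "'a measure \<Rightarrow> (nat \<Rightarrow> 'a \<Rightarrow> real) \<Rightarrow> ('a \<Rightarrow> real) \<Rightarrow> bool" where
  "conv_loc_meas M fs f \<longleftrightarrow>
     (\<forall>A\<in>sets M. emeasure M A < \<infinity> \<longrightarrow> (\<forall>\<epsilon>>0.
        (\<lambda>n. emeasure M (A \<inter> {x\<in>space M. \<bar>fs n x - f x\<bar> > \<epsilon>})) \<longlonglongrightarrow> 0))"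

text \<open>Nonlinear Dirichlet form on L^2(M); E is defined on representatives and must
  respect a.e. equality.\<close>
definition nonlinear_dirichlet_form :: "'a measure \<Rightarrow> (('a \<Rightarrow> real) \<Rightarrow> ennreal) \<Rightarrow> bool" where
  "nonlinear_dirichlet_form M E \<longleftrightarrow>
     (\<forall>f g. L2 M f \<and> L2 M g \<and> (AE x in M. f x = g x) \<longrightarrow> E f = E g) \<and>
     (\<forall>fs f. (\<forall>n. L2 M (fs n)) \<and> L2 M f \<and>
        (\<lambda>n. integral\<^sup>L M (\<lambda>x. (fs n x - f x)\<^sup>2)) \<longlonglongrightarrow> 0
        \<longrightarrow> E f \<le> liminf (\<lambda>n. E (fs n))) \<and>
     (\<forall>f g (t::real). L2 M f \<and> L2 M g \<and> 0 \<le> t \<and> t \<le> 1 \<longrightarrow>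
        E (\<lambda>x. t * f x + (1 - t) * g x) \<le> ennreal t * E f + ennreal (1 - t) * E g) \<and>
     (\<forall>f. L2 M f \<longrightarrow> E (\<lambda>x. - f x) = E f) \<and>
     E (\<lambda>x. 0) = 0 \<and>
     (\<forall>f g (C::real \<Rightarrow> real). L2 M f \<and> L2 M g \<and> C 0 = 0 \<and>
        (\<forall>s t. \<bar>C s - C t\<bar> \<le> \<bar>s - t\<bar>) \<longrightarrow>
        E (\<lambda>x. f x + C (g x)) + E (\<lambda>x. f x - C (g x))
          \<le> E (\<lambda>x. f x + g x) + E (\<lambda>x. f x - g x))"

definition weak_Delta2 :: "'a measure \<Rightarrow> (('a \<Rightarrow> real) \<Rightarrow> ennreal) \<Rightarrow> bool" where
  "weak_Delta2 M E \<longleftrightarrow>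
     (\<forall>fs. (\<forall>n. L2 M (fs n)) \<and> (\<lambda>n. E (fs n)) \<longlonglongrightarrow> 0
        \<longrightarrow> (\<lambda>n. E (\<lambda>x. 2 * fs n x)) \<longlonglongrightarrow> 0)"

definition modular_space :: "'a measure \<Rightarrow> (('a \<Rightarrow> real) \<Rightarrow> ennreal) \<Rightarrow> ('a \<Rightarrow> real) set" where
  "modular_space M E = {f. L2 M f \<and> ((\<lambda>t. E (\<lambda>x. t * f x)) \<longlongrightarrow> 0) (at_right 0)}"

definition luxemburg :: "(('a \<Rightarrow> real) \<Rightarrow> ennreal) \<Rightarrow> ('a \<Rightarrow> real) \<Rightarrow> real" where
  "luxemburg E f = Inf {s::real. s > 0 \<and> E (\<lambda>x. f x / s) \<le> 1}"

text \<open>E extended by +infinity outside L^2, and its lower semicontinuous relaxation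
  on L^0 w.r.t. local convergence in measure (sequential form; this topology is
  metrizable for sigma-finite measures).\<close>
definition E_ext :: "'a measure \<Rightarrow> (('a \<Rightarrow> real) \<Rightarrow> ennreal) \<Rightarrow> ('a \<Rightarrow> real) \<Rightarrow> ennreal" where
  "E_ext M E f = (if L2 M f then E f else \<infinity>)"

definition E_e :: "'a measure \<Rightarrow> (('a \<Rightarrow> real) \<Rightarrow> ennreal) \<Rightarrow> ('a \<Rightarrow> real) \<Rightarrow> ennreal" where
  "E_e M E f = (INF fs \<in> {fs. (\<forall>n. fs n \<in> borel_measurable M) \<and> conv_loc_meas M fs f}.
                  liminf (\<lambda>n. E_ext M E (fs n)))"

definition modular_space_e :: "'a measure \<Rightarrow> (('a \<Rightarrow> real) \<Rightarrow> ennreal) \<Rightarrow> ('a \<Rightarrow> real) set" where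
  "modular_space_e M E = {f. f \<in> borel_measurable M \<and>
      ((\<lambda>t. E_e M E (\<lambda>x. t * f x)) \<longlongrightarrow> 0) (at_right 0)}"

definition resolvent :: "'a measure \<Rightarrow> (('a \<Rightarrow> real) \<Rightarrow> ennreal) \<Rightarrow> real \<Rightarrow> ('a \<Rightarrow> real) \<Rightarrow> ('a \<Rightarrow> real)" where
  "resolvent M E \<alpha> f = (SOME h. L2 M h \<and> (\<forall>k. L2 M k \<longrightarrow>
      E h + ennreal (\<alpha> / 2 * integral\<^sup>L M (\<lambda>x. (h x - f x / \<alpha>)\<^sup>2))
      \<le> E k + ennreal (\<alpha> / 2 * integral\<^sup>L M (\<lambda>x. (k x - f x / \<alpha>)\<^sup>2))))"

text \<open>Extension to nonnegative f \<in> L^1 by monotone limits along min f n \<in> L^2.\<close>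
definition resolvent_pos :: "'a measure \<Rightarrow> (('a \<Rightarrow> real) \<Rightarrow> ennreal) \<Rightarrow> real \<Rightarrow> ('a \<Rightarrow> real) \<Rightarrow> 'a \<Rightarrow> ereal" where
  "resolvent_pos M E \<alpha> f x = (SUP n::nat. ereal (resolvent M E \<alpha> (\<lambda>y. min (f y) (real n)) x))"

text \<open>Green operator: limit as alpha \<rightarrow> 0+, taken along alpha = 1/(k+1).\<close>
definition green :: "'a measure \<Rightarrow> (('a \<Rightarrow> real) \<Rightarrow> ennreal) \<Rightarrow> ('a \<Rightarrow> real) \<Rightarrow> 'a \<Rightarrow> ereal" where
  "green M E f x = liminf (\<lambda>k::nat. resolvent_pos M E (1 / real (Suc k)) f x)"

definition critical :: "'a measure \<Rightarrow> (('a \<Rightarrow> real) \<Rightarrow> ennreal) \<Rightarrow> bool" where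
  "critical M E \<longleftrightarrow>
     (\<forall>f. f \<in> borel_measurable M \<and> integrable M f \<and> (\<forall>x\<in>space M. 0 \<le> f x) \<longrightarrow>
        (AE x in M. \<not> (0 < f x \<and> green M E f x < \<infinity>)))"

end

theory Submission
  imports Defs
begin

text \<open>
  Condition (iii) is the pivot.  Given approximating units \<open>e\<^sub>n\<close> as in (iii), convexity alone turns
  \<open>\<parallel>e\<^sub>n\<parallel>\<^sub>L \<rightarrow> 0\<close> into \<open>\<E>(c e\<^sub>n) \<rightarrow> 0\<close> for every \<open>c > 0\<close>, so the relaxation \<open>\<E>\<^sub>e\<close>
  vanishes on all constants, which is (ii).  Testing the minimality of the resolvents \<open>h\<^sub>k = G\<^bsub>1/k\<^esub>(f \<and> 1)\<close> against the
  competitors \<open>max h\<^sub>k (c e\<^sub>n)\<close> bounds the measure of every set on which \<open>f\<close> is bounded below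
  and the \<open>h\<^sub>k\<close> stay bounded, up to the part where \<open>e\<^sub>n\<close> is far from \<open>1\<close>, by a multiple of \<open>\<E>(c e\<^sub>n) \<rightarrow> 0\<close>; hence \<open>G f = \<infinity>\<close> almost
  everywhere on \<open>{f > 0}\<close>, which is (i).

  Conversely, both (i) and (ii) provide, on each set of finite measure, functions of small
  Luxemburg norm that are close to \<open>1\<close>: the truncations \<open>(w \<or> 0) \<and> c\<close>, divided by \<open>c\<close>, of a
  function \<open>w\<close> of bounded energy that is close to or above the level \<open>c\<close>.  Under (ii), \<open>w\<close> is
  a near-optimal approximant of a large constant in the relaxation; under (i), \<open>w = G\<^bsub>1/k\<^esub> f\<close>
  for a small strictly positive \<open>f\<close>, which tends to \<open>\<infinity>\<close> almost everywhere and satisfies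
  \<open>\<E>(w \<and> c) \<le> c \<integral>f\<close>.  A diagonal argument along an exhaustion by sets of finite measure
  then yields (iii).  Because the resolvent is defined by a choice operator, all of this rests on
  the existence of the minimizers, which follows from the uniform convexity of the quadratic
  term and the completeness of \<open>L\<^sup>2\<close>.
\<close>

lemma square_le_of_abs_le_sum:
  fixes a b g :: real
  assumes "\<bar>g\<bar> \<le> \<bar>a\<bar> + \<bar>b\<bar>"
  shows "g\<^sup>2 \<le> 2 * a\<^sup>2 + 2 * b\<^sup>2"
proof -
  have "g\<^sup>2 \<le> (\<bar>a\<bar> + \<bar>b\<bar>)\<^sup>2"
    using assms power_mono[of "\<bar>g\<bar>" "\<bar>a\<bar> + \<bar>b\<bar>" 2] by simp
  also have "\<dots> \<le> 2 * a\<^sup>2 + 2 * b\<^sup>2"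
    using sum_squares_bound[of "\<bar>a\<bar>" "\<bar>b\<bar>"] by (simp add: power2_sum)
  finally show ?thesis .
qed

lemma abs_mult_le_weighted_squares:
  fixes d v \<eta> :: real
  assumes "0 < \<eta>"
  shows "\<bar>d * v\<bar> \<le> (d\<^sup>2 / \<eta> + \<eta> * v\<^sup>2) / 2"
proof -
  have "0 \<le> (\<bar>d\<bar> - \<eta> * \<bar>v\<bar>)\<^sup>2" by simp
  then have "2 * \<eta> * \<bar>d * v\<bar> \<le> d\<^sup>2 + \<eta>\<^sup>2 * v\<^sup>2"
    by (simp add: power2_eq_square algebra_simps abs_mult)
  then show ?thesis
    using assms by (simp add: field_simps power2_eq_square)
qed

lemma square_midpoint_diff:
  fixes a b v :: real
  shows "((a + b) / 2 - v)\<^sup>2 = ((a - v)\<^sup>2 + (b - v)\<^sup>2) / 2 - (a - b)\<^sup>2 / 4"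
  by (simp add: power2_eq_square field_simps)

lemma square_shift_expand:
  fixes a x f :: real
  assumes "a \<noteq> 0"
  shows "a / 2 * (x - f / a)\<^sup>2 = a / 2 * x\<^sup>2 - x * f + f\<^sup>2 / (2 * a)"
  using assms by (simp add: power2_eq_square field_simps)

lemma square_min_zero_le_diff:
  fixes h v :: real
  assumes "0 \<le> v"
  shows "(min h 0)\<^sup>2 \<le> (h - v)\<^sup>2 - (max h 0 - v)\<^sup>2"
proof (cases "0 \<le> h")
  case False
  then have "h * v \<le> 0" using assms by (simp add: mult_nonpos_nonneg)
  then show ?thesis using False by (simp add: power2_eq_square algebra_simps)
qed simp

lemma max_competitor_pointwise:
  fixes a h u f :: real
  assumes "0 < a"
  shows "f * max (u - h) 0 - a / 2 * u\<^sup>2 \<le> a / 2 * (h - f / a)\<^sup>2 - a / 2 * (max h u - f / a)\<^sup>2"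
proof (cases "u \<le> h")
  case False
  then have "max h u = u" "max (u - h) 0 = u - h" by auto
  then show ?thesis
    using assms unfolding square_shift_expand[OF less_imp_neq[OF assms, symmetric]]
    by (simp add: algebra_simps)
qed (use assms in \<open>simp add: max_def\<close>)

lemma truncation_competitor_pointwise:
  fixes a h f c :: real
  assumes "0 < a" "0 \<le> h" "0 \<le> f" "0 \<le> c"
  shows "- (c * f) \<le> a / 2 * (h - f / a)\<^sup>2 - a / 2 * (max (h - c) 0 - f / a)\<^sup>2"
proof (cases "h \<le> c")
  case True
  then have "h * f \<le> c * f" using assms by (simp add: mult_right_mono)
  moreover have "0 \<le> a * h\<^sup>2" using assms by simp
  ultimately show ?thesis
    using True unfolding square_shift_expand[OF less_imp_neq[OF assms(1), symmetric]]
    by (simp add: max_def)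
next
  case False
  then have "0 \<le> a * (c * (2 * h - c))" "0 \<le> c * f" using assms by simp_all
  moreover have "a / 2 * (h - f / a)\<^sup>2 - a / 2 * (max (h - c) 0 - f / a)\<^sup>2 = a * (c * (2 * h - c)) / 2 - c * f"
    using False unfolding square_shift_expand[OF less_imp_neq[OF assms(1), symmetric]]
    by (simp add: power2_eq_square algebra_simps add_divide_distrib diff_divide_distrib)
  ultimately show ?thesis by simp
qed

lemma max_min_exchange_pointwise:
  fixes a b x y f :: real
  assumes "0 < a" "0 < b"
  shows "a / 2 * (max x y - f / a)\<^sup>2 + b / 2 * (min x y - f / b)\<^sup>2
          - a / 2 * (x - f / a)\<^sup>2 - b / 2 * (y - f / b)\<^sup>2
        = (if x < y then (b - a) / 2 * (x\<^sup>2 - y\<^sup>2) else 0)"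
  unfolding square_shift_expand[OF less_imp_neq[OF assms(1), symmetric]]
    square_shift_expand[OF less_imp_neq[OF assms(2), symmetric]]
  by (cases "x < y") (simp_all add: max_def min_def algebra_simps, simp add: field_simps)

lemma clip_deviation_imp_less:
  fixes w c \<delta> :: real
  assumes c: "0 < c" and \<delta>: "0 \<le> \<delta>" and dev: "\<delta> < \<bar>max 0 (min w c) / c - 1\<bar>"
  shows "w < c * (1 - \<delta>)"
proof (rule ccontr)
  assume "\<not> w < c * (1 - \<delta>)"
  then have "c * (1 - \<delta>) \<le> max 0 (min w c)"
    using c \<delta> by (auto simp: min_def max_def mult_le_cancel_left1)
  then have "1 - \<delta> \<le> max 0 (min w c) / c"
    using c by (simp add: field_simps)
  moreover have "max 0 (min w c) / c \<le> 1"
    using c by simp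
  ultimately show False
    using dev by (simp add: abs_if split: if_splits)
qed

lemma quarter_deviation_of_less:
  fixes t N y :: real
  assumes "0 < t" "N < 2 * t" "N + t > 4 * t * y"
  shows "1 / 4 < \<bar>y - 1\<bar>"
proof -
  have "4 * t * y < 3 * t" using assms(2,3) by linarith
  then have "y < 3 / 4" using assms(1) by simp
  then show ?thesis by linarith
qed

lemma Cauchy_of_inverse_bound:
  fixes D :: "nat \<Rightarrow> nat \<Rightarrow> real"
  assumes D: "\<And>i j. D i j \<le> c * (1 / Suc i + 1 / Suc j)" and c: "0 < c" and e: "0 < e"
  shows "\<exists>N. \<forall>i\<ge>N. \<forall>j\<ge>N. D i j < e"
proof -
  have "(\<lambda>n. 2 * c * inverse (real (Suc n))) \<longlonglongrightarrow> 2 * c * 0"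
    by (intro tendsto_mult tendsto_const LIMSEQ_inverse_real_of_nat)
  then have "\<forall>\<^sub>F n in sequentially. 2 * c * inverse (real (Suc n)) < e"
    using e by (intro order_tendstoD(2)) auto
  then obtain N where N: "2 * c / real (Suc N) < e"
    using eventually_happens'[OF sequentially_bot] by (auto simp: inverse_eq_divide)
  have "D i j < e" if "N \<le> i" "N \<le> j" for i j
  proof -
    have "1 / real (Suc i) \<le> 1 / real (Suc N)" "1 / real (Suc j) \<le> 1 / real (Suc N)"
      using that by (simp_all add: frac_le)
    then have "c * (1 / Suc i + 1 / Suc j) \<le> c * (1 / real (Suc N) + 1 / real (Suc N))"
      using c by (intro mult_left_mono) auto
    also have "\<dots> = 2 * c / real (Suc N)"
      by (simp add: field_simps)
    finally show ?thesis using D[of i j] N by linarith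
  qed
  then show ?thesis by blast
qed

lemma ennreal_liminf_add_le:
  fixes f g :: "nat \<Rightarrow> ennreal"
  shows "liminf f + liminf g \<le> liminf (\<lambda>n. f n + g n)"
proof -
  define A where "A = (\<lambda>n. INF m\<in>{n..}. f m)"
  define B where "B = (\<lambda>n. INF m\<in>{n..}. g m)"
  have "incseq A" "incseq B"
    unfolding A_def B_def by (auto intro!: incseq_SucI INF_superset_mono)
  then have "liminf f + liminf g = (SUP n. A n + B n)"
    unfolding liminf_SUP_INF A_def B_def by (simp add: ennreal_SUP_add)
  also have "\<dots> \<le> (SUP n. INF m\<in>{n..}. f m + g m)"
  proof (rule SUP_mono)
    show "\<exists>m\<in>UNIV. A n + B n \<le> (INF m\<in>{m..}. f m + g m)" for n
      unfolding A_def B_def by (auto intro!: bexI[of _ n] INF_greatest add_mono INF_lower)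
  qed
  also have "\<dots> = liminf (\<lambda>n. f n + g n)" unfolding liminf_SUP_INF ..
  finally show ?thesis .
qed

lemma L2_borel_measurable: "L2 M f \<Longrightarrow> f \<in> borel_measurable M"
  by (simp add: L2_def)

lemma L2_integrable_square: "L2 M f \<Longrightarrow> integrable M (\<lambda>x. (f x)\<^sup>2)"
  by (simp add: L2_def)

lemma L2_dominated_sum:
  assumes "g \<in> borel_measurable M" "L2 M f1" "L2 M f2"
    and "\<And>x. x \<in> space M \<Longrightarrow> \<bar>g x\<bar> \<le> \<bar>f1 x\<bar> + \<bar>f2 x\<bar>"
  shows "L2 M g"
proof -
  have "integrable M (\<lambda>x. 2 * (f1 x)\<^sup>2 + 2 * (f2 x)\<^sup>2)"
    using assms(2,3) by (auto simp: L2_def)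
  then have "integrable M (\<lambda>x. (g x)\<^sup>2)"
  proof (rule Bochner_Integration.integrable_bound)
    show "(\<lambda>x. (g x)\<^sup>2) \<in> borel_measurable M" using assms(1) by measurable
    show "AE x in M. norm ((g x)\<^sup>2) \<le> norm (2 * (f1 x)\<^sup>2 + 2 * (f2 x)\<^sup>2)"
      using square_le_of_abs_le_sum[OF assms(4)] by (intro AE_I2) simp
  qed
  then show ?thesis using assms(1) by (simp add: L2_def)
qed

lemma L2_dominated:
  "g \<in> borel_measurable M \<Longrightarrow> L2 M f \<Longrightarrow> (\<And>x. x \<in> space M \<Longrightarrow> \<bar>g x\<bar> \<le> \<bar>f x\<bar>) \<Longrightarrow> L2 M g"
  by (rule L2_dominated_sum[of g M f f]) force+

lemma L2_zero [simp]: "L2 M (\<lambda>x. 0)"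
  by (simp add: L2_def)

lemma L2_add: "L2 M f \<Longrightarrow> L2 M g \<Longrightarrow> L2 M (\<lambda>x. f x + g x)"
  by (rule L2_dominated_sum[of _ M f g]) (auto simp: L2_def)

lemma L2_diff: "L2 M f \<Longrightarrow> L2 M g \<Longrightarrow> L2 M (\<lambda>x. f x - g x)"
  by (rule L2_dominated_sum[of _ M f g]) (auto simp: L2_def)

lemma L2_max: "L2 M f \<Longrightarrow> L2 M g \<Longrightarrow> L2 M (\<lambda>x. max (f x) (g x))"
  by (rule L2_dominated_sum[of _ M f g]) (auto simp: L2_def)

lemma L2_min: "L2 M f \<Longrightarrow> L2 M g \<Longrightarrow> L2 M (\<lambda>x. min (f x) (g x))"
  by (rule L2_dominated_sum[of _ M f g]) (auto simp: L2_def)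

lemma L2_cmult: "L2 M f \<Longrightarrow> L2 M (\<lambda>x. c * f x)"
  by (auto simp: L2_def power_mult_distrib)

lemma L2_divide: "L2 M f \<Longrightarrow> L2 M (\<lambda>x. f x / c)"
  using L2_cmult[of M f "1 / c"] by simp

lemma L2_integrable_mult:
  assumes "L2 M f" "L2 M g"
  shows "integrable M (\<lambda>x. f x * g x)"
proof (rule Bochner_Integration.integrable_bound)
  show "integrable M (\<lambda>x. (f x)\<^sup>2 + (g x)\<^sup>2)"
    using assms by (auto simp: L2_def)
  show "AE x in M. norm (f x * g x) \<le> norm ((f x)\<^sup>2 + (g x)\<^sup>2)"
  proof (intro AE_I2)
    fix x
    have "2 * (\<bar>f x\<bar> * \<bar>g x\<bar>) \<le> (f x)\<^sup>2 + (g x)\<^sup>2"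
      using sum_squares_bound[of "\<bar>f x\<bar>" "\<bar>g x\<bar>"] by (simp add: mult.assoc)
    moreover have "0 \<le> \<bar>f x\<bar> * \<bar>g x\<bar>" by simp
    ultimately have "\<bar>f x\<bar> * \<bar>g x\<bar> \<le> (f x)\<^sup>2 + (g x)\<^sup>2" by linarith
    then show "norm (f x * g x) \<le> norm ((f x)\<^sup>2 + (g x)\<^sup>2)"
      by (simp add: abs_mult)
  qed
qed (use assms in \<open>auto simp: L2_def\<close>)

lemma L2_of_integrable_bounded:
  assumes "g \<in> borel_measurable M" "integrable M f"
    and "\<And>x. x \<in> space M \<Longrightarrow> \<bar>g x\<bar> \<le> 1 \<and> \<bar>g x\<bar> \<le> \<bar>f x\<bar>"
  shows "L2 M g"
proof -
  have "(g x)\<^sup>2 \<le> \<bar>f x\<bar>" if "x \<in> space M" for x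
  proof -
    have "(g x)\<^sup>2 = \<bar>g x\<bar> * \<bar>g x\<bar>" by (simp add: power2_eq_square)
    also have "\<dots> \<le> 1 * \<bar>g x\<bar>" using assms(3)[OF that] by (intro mult_right_mono) auto
    finally show ?thesis using assms(3)[OF that] by simp
  qed
  then have "integrable M (\<lambda>x. (g x)\<^sup>2)"
    using assms(1) by (intro Bochner_Integration.integrable_bound[OF assms(2)] AE_I2) auto
  then show ?thesis using assms(1) by (simp add: L2_def)
qed

lemma nn_integral_le_liminf_AE_tendsto:
  fixes u :: "nat \<Rightarrow> 'a \<Rightarrow> real"
  assumes [measurable]: "\<And>n. u n \<in> borel_measurable M"
    and lim: "AE x in M. (\<lambda>n. u n x) \<longlonglongrightarrow> v x"
  shows "(\<integral>\<^sup>+x. ennreal (v x) \<partial>M) \<le> liminf (\<lambda>n. \<integral>\<^sup>+x. ennreal (u n x) \<partial>M)"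
proof -
  have "(\<integral>\<^sup>+x. ennreal (v x) \<partial>M) = (\<integral>\<^sup>+x. liminf (\<lambda>n. ennreal (u n x)) \<partial>M)"
    using lim by (intro nn_integral_cong_AE) (auto intro!: lim_imp_Liminf[symmetric] tendsto_ennrealI)
  also have "\<dots> \<le> liminf (\<lambda>n. \<integral>\<^sup>+x. ennreal (u n x) \<partial>M)"
    by (rule nn_integral_liminf) measurable
  finally show ?thesis .
qed

lemma L2_nn_integral_square:
  "L2 M f \<Longrightarrow> (\<integral>\<^sup>+x. ennreal ((f x)\<^sup>2) \<partial>M) = ennreal (\<integral>x. (f x)\<^sup>2 \<partial>M)"
  by (rule nn_integral_eq_integral) (auto simp: L2_def)

lemma L1_Cauchy_of_L2_Cauchy_weighted:
  fixes k :: "nat \<Rightarrow> 'a \<Rightarrow> real"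
  assumes k: "\<And>n. L2 M (k n)"
    and Cauchy: "\<And>e. 0 < e \<Longrightarrow> \<exists>N. \<forall>i\<ge>N. \<forall>j\<ge>N. (\<integral>x. (k i x - k j x)\<^sup>2 \<partial>M) < e"
    and w: "L2 M w" and e: "0 < e"
  shows "\<exists>N. \<forall>i\<ge>N. \<forall>j\<ge>N. (\<integral>x. norm (k i x * w x - k j x * w x) \<partial>M) < e"
proof -
  define G where "G = (\<integral>x. (w x)\<^sup>2 \<partial>M)"
  have G: "0 \<le> G" unfolding G_def by simp
  define \<eta> where "\<eta> = e / (G + 1)"
  have \<eta>: "0 < \<eta>" "\<eta> * G < e" unfolding \<eta>_def using e G by (auto simp: field_simps)
  obtain N where N: "\<And>i j. N \<le> i \<Longrightarrow> N \<le> j \<Longrightarrow> (\<integral>x. (k i x - k j x)\<^sup>2 \<partial>M) < \<eta> * e"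
    using Cauchy[of "\<eta> * e"] \<eta> e by auto
  have "(\<integral>x. norm (k i x * w x - k j x * w x) \<partial>M) < e" if ij: "N \<le> i" "N \<le> j" for i j
  proof -
    have "(\<integral>x. norm (k i x * w x - k j x * w x) \<partial>M)
        \<le> (\<integral>x. ((k i x - k j x)\<^sup>2 / \<eta> + \<eta> * (w x)\<^sup>2) / 2 \<partial>M)"
      using L2_integrable_mult[OF k w] L2_integrable_square[OF L2_diff[OF k k]] L2_integrable_square[OF w]
        abs_mult_le_weighted_squares[OF \<eta>(1), of "k i x - k j x" "w x" for x]
      by (intro integral_mono) (auto simp: left_diff_distrib)
    also have "\<dots> = ((\<integral>x. (k i x - k j x)\<^sup>2 \<partial>M) / \<eta> + \<eta> * G) / 2"
      unfolding G_def using L2_integrable_square[OF L2_diff[OF k k]] L2_integrable_square[OF w] by simp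
    also have "\<dots> < e"
    proof -
      have "(\<integral>x. (k i x - k j x)\<^sup>2 \<partial>M) / \<eta> < e"
        using N[OF ij] \<eta>(1) by (simp add: pos_divide_less_eq mult.commute)
      then show ?thesis using \<eta>(2) by (simp add: mult.commute)
    qed
    finally show ?thesis .
  qed
  then show ?thesis by blast
qed

text \<open>On a \<open>\<sigma>\<close>-finite space, multiplying by the square root of a strictly positive
  integrable function makes an \<open>L\<^sup>2\<close>-Cauchy sequence \<open>L\<^sup>1\<close>-Cauchy; since the weight
  never vanishes, it can be divided out again from the pointwise limit.\<close>

lemma (in sigma_finite_measure) L2_Cauchy_AE_convergent_subseq:
  fixes k :: "nat \<Rightarrow> 'a \<Rightarrow> real"
  assumes k: "\<And>n. L2 M (k n)"
    and Cauchy: "\<And>e. 0 < e \<Longrightarrow> \<exists>N. \<forall>i\<ge>N. \<forall>j\<ge>N. (\<integral>x. (k i x - k j x)\<^sup>2 \<partial>M) < e"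
  obtains r h where "strict_mono r" "h \<in> borel_measurable M"
    "AE x in M. (\<lambda>n. k (r n) x) \<longlonglongrightarrow> h x"
proof -
  obtain g :: "'a \<Rightarrow> real" where g: "g \<in> borel_measurable M" "\<And>x. 0 < g x" "integrable M g"
    using obtain_positive_integrable_function by metis
  define w where "w = (\<lambda>x. sqrt (g x))"
  have wpos: "0 < w x" and w2: "(w x)\<^sup>2 = g x" for x
    unfolding w_def using g(2) by (auto intro: less_imp_le)
  have Lw: "L2 M w" unfolding L2_def using g(1,3) w2 unfolding w_def by simp
  define s where "s = (\<lambda>n x. k n x * w x)"
  have s: "integrable M (s n)" for n unfolding s_def by (rule L2_integrable_mult[OF k Lw])
  have L1_Cauchy: "\<exists>N. \<forall>i\<ge>N. \<forall>j\<ge>N. (\<integral>x. norm (s i x - s j x) \<partial>M) < e" if "0 < e" for e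
    unfolding s_def by (rule L1_Cauchy_of_L2_Cauchy_weighted[OF k Cauchy Lw that])
  obtain r where r: "strict_mono r" "AE x in M. Cauchy (\<lambda>n. s (r n) x)"
    by (rule cauchy_L1_AE_cauchy_subseq[OF s L1_Cauchy])
  define h where "h = (\<lambda>x. lim (\<lambda>n. k (r n) x))"
  have "h \<in> borel_measurable M"
    unfolding h_def using k by (intro borel_measurable_lim_metric) (simp add: L2_def)
  moreover have "AE x in M. (\<lambda>n. k (r n) x) \<longlonglongrightarrow> h x"
    using r(2)
  proof eventually_elim
    case (elim x)
    then obtain l where "(\<lambda>n. k (r n) x * w x) \<longlonglongrightarrow> l"
      by (auto simp: s_def Cauchy_convergent_iff convergent_def)
    then have "(\<lambda>n. k (r n) x * w x / w x) \<longlonglongrightarrow> l / w x"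
      using wpos[of x] by (intro tendsto_intros) auto
    then have "convergent (\<lambda>n. k (r n) x)"
      using wpos[of x] by (auto simp: convergent_def)
    then show ?case unfolding h_def by (simp add: convergent_LIMSEQ_iff)
  qed
  ultimately show ?thesis using r(1) that by blast
qed

lemma L2_Cauchy_nn_dist_AE_limit:
  fixes k :: "nat \<Rightarrow> 'a \<Rightarrow> real"
  assumes k: "\<And>n. L2 M (k n)"
    and Cauchy: "\<And>e. 0 < e \<Longrightarrow> \<exists>N. \<forall>i\<ge>N. \<forall>j\<ge>N. (\<integral>x. (k i x - k j x)\<^sup>2 \<partial>M) < e"
    and r: "strict_mono r" and [measurable]: "h \<in> borel_measurable M"
    and conv: "AE x in M. (\<lambda>n. k (r n) x) \<longlonglongrightarrow> h x" and e: "0 < e"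
  shows "\<exists>N. \<forall>j\<ge>N. (\<integral>\<^sup>+x. ennreal ((k j x - h x)\<^sup>2) \<partial>M) \<le> ennreal e"
proof -
  have [measurable]: "k n \<in> borel_measurable M" for n using k by (simp add: L2_def)
  obtain N where N: "\<And>i j. N \<le> i \<Longrightarrow> N \<le> j \<Longrightarrow> (\<integral>x. (k i x - k j x)\<^sup>2 \<partial>M) < e"
    using Cauchy[OF e] by auto
  have "(\<integral>\<^sup>+x. ennreal ((k j x - h x)\<^sup>2) \<partial>M) \<le> ennreal e" if j: "N \<le> j" for j
  proof -
    have "AE x in M. (\<lambda>i. (k j x - k (r i) x)\<^sup>2) \<longlonglongrightarrow> (k j x - h x)\<^sup>2"
      using conv by eventually_elim (intro tendsto_intros)
    then have "(\<integral>\<^sup>+x. ennreal ((k j x - h x)\<^sup>2) \<partial>M)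
        \<le> liminf (\<lambda>i. \<integral>\<^sup>+x. ennreal ((k j x - k (r i) x)\<^sup>2) \<partial>M)"
      by (intro nn_integral_le_liminf_AE_tendsto) measurable
    also have "\<dots> \<le> ennreal e"
    proof (rule Liminf_le)
      show "\<forall>\<^sub>F i in sequentially. (\<integral>\<^sup>+x. ennreal ((k j x - k (r i) x)\<^sup>2) \<partial>M) \<le> ennreal e"
        using eventually_ge_at_top[of N]
      proof eventually_elim
        case (elim i)
        then have "N \<le> r i" using seq_suble[OF r, of i] by linarith
        then show ?case
          using N[OF j] L2_nn_integral_square[OF L2_diff[OF k k], of j "r i"]
          by (simp add: ennreal_leI less_imp_le)
      qed
    qed simp
    finally show ?thesis .
  qed
  then show ?thesis by blast
qed

lemma L2_limit_of_Cauchy: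
  fixes k :: "nat \<Rightarrow> 'a \<Rightarrow> real"
  assumes k: "\<And>n. L2 M (k n)"
    and Cauchy: "\<And>e. 0 < e \<Longrightarrow> \<exists>N. \<forall>i\<ge>N. \<forall>j\<ge>N. (\<integral>x. (k i x - k j x)\<^sup>2 \<partial>M) < e"
    and r: "strict_mono r" and [measurable]: "h \<in> borel_measurable M"
    and conv: "AE x in M. (\<lambda>n. k (r n) x) \<longlonglongrightarrow> h x"
  shows "L2 M h" and "(\<lambda>n. \<integral>x. (k n x - h x)\<^sup>2 \<partial>M) \<longlonglongrightarrow> 0"
proof -
  have [measurable]: "k n \<in> borel_measurable M" for n using k by (simp add: L2_def)
  have small: "\<exists>N. \<forall>j\<ge>N. (\<integral>\<^sup>+x. ennreal ((k j x - h x)\<^sup>2) \<partial>M) \<le> ennreal e" if "0 < e" for e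
    by (rule L2_Cauchy_nn_dist_AE_limit[OF k Cauchy r _ conv that]) measurable
  obtain N where N: "(\<integral>\<^sup>+x. ennreal ((k N x - h x)\<^sup>2) \<partial>M) \<le> ennreal 1"
    using small[of 1] by auto
  have "L2 M (\<lambda>x. k N x - h x)"
    unfolding L2_def using N by (auto intro!: integrableI_nonneg le_less_trans[OF N])
  then have "L2 M (\<lambda>x. k N x - (k N x - h x))"
    by (rule L2_diff[OF k])
  then show Lh: "L2 M h" by simp
  show "(\<lambda>n. \<integral>x. (k n x - h x)\<^sup>2 \<partial>M) \<longlonglongrightarrow> 0"
  proof (rule LIMSEQ_I)
    fix e :: real assume e: "0 < e"
    obtain N where N: "\<And>j. N \<le> j \<Longrightarrow> (\<integral>\<^sup>+x. ennreal ((k j x - h x)\<^sup>2) \<partial>M) \<le> ennreal (e / 2)"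
      using small[of "e / 2"] e by auto
    have "(\<integral>x. (k n x - h x)\<^sup>2 \<partial>M) \<le> e / 2" if "N \<le> n" for n
      using N[OF that] e unfolding L2_nn_integral_square[OF L2_diff[OF k Lh]] by simp
    then have "norm ((\<integral>x. (k n x - h x)\<^sup>2 \<partial>M) - 0) < e" if "N \<le> n" for n
      using e that by fastforce
    then show "\<exists>N. \<forall>n\<ge>N. norm ((\<integral>x. (k n x - h x)\<^sup>2 \<partial>M) - 0) < e" by blast
  qed
qed

section \<open>Nonlinear Dirichlet forms\<close>

locale nonlinear_dirichlet = sigma_finite_measure M for M :: "'a measure" +
  fixes E :: "('a \<Rightarrow> real) \<Rightarrow> ennreal"
  assumes nonlinear_dirichlet_form: "nonlinear_dirichlet_form M E"
begin

lemma E_lsc: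
  "(\<And>n. L2 M (fs n)) \<Longrightarrow> L2 M f \<Longrightarrow> (\<lambda>n. \<integral>x. (fs n x - f x)\<^sup>2 \<partial>M) \<longlonglongrightarrow> 0 \<Longrightarrow>
    E f \<le> liminf (\<lambda>n. E (fs n))"
  using nonlinear_dirichlet_form unfolding nonlinear_dirichlet_form_def by blast

lemma E_convex:
  "L2 M f \<Longrightarrow> L2 M g \<Longrightarrow> 0 \<le> t \<Longrightarrow> t \<le> 1 \<Longrightarrow>
    E (\<lambda>x. t * f x + (1 - t) * g x) \<le> ennreal t * E f + ennreal (1 - t) * E g"
  using nonlinear_dirichlet_form unfolding nonlinear_dirichlet_form_def by blast

lemma E_uminus: "L2 M f \<Longrightarrow> E (\<lambda>x. - f x) = E f"
  using nonlinear_dirichlet_form unfolding nonlinear_dirichlet_form_def by blast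

lemma E_zero [simp]: "E (\<lambda>x. 0) = 0"
  using nonlinear_dirichlet_form unfolding nonlinear_dirichlet_form_def by blast

lemma E_contraction_pair:
  "L2 M f \<Longrightarrow> L2 M g \<Longrightarrow> C 0 = 0 \<Longrightarrow> (\<And>s t. \<bar>C s - C t\<bar> \<le> \<bar>s - t\<bar>) \<Longrightarrow>
    E (\<lambda>x. f x + C (g x)) + E (\<lambda>x. f x - C (g x)) \<le> E (\<lambda>x. f x + g x) + E (\<lambda>x. f x - g x)"
  using nonlinear_dirichlet_form unfolding nonlinear_dirichlet_form_def by blast

lemma E_scale: "L2 M f \<Longrightarrow> 0 \<le> t \<Longrightarrow> t \<le> 1 \<Longrightarrow> E (\<lambda>x. t * f x) \<le> ennreal t * E f"
  using E_convex[of f "\<lambda>x. 0" t] by simp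

lemma E_normal_contraction:
  assumes f: "L2 M f" and C: "C 0 = 0" "\<And>s t. \<bar>C s - C t\<bar> \<le> \<bar>s - t\<bar>"
    and meas: "(\<lambda>x. C (f x)) \<in> borel_measurable M"
  shows "E (\<lambda>x. C (f x)) \<le> E f"
proof -
  have L: "L2 M (\<lambda>x. C (f x))"
    by (rule L2_dominated[OF meas f]) (use C(2)[of _ 0] C(1) in simp)
  have "E (\<lambda>x. 0 + C (f x)) + E (\<lambda>x. 0 - C (f x)) \<le> E (\<lambda>x. 0 + f x) + E (\<lambda>x. 0 - f x)"
    by (rule E_contraction_pair[OF L2_zero f C])
  then have "E (\<lambda>x. C (f x)) + E (\<lambda>x. C (f x)) \<le> E f + E f"
    using E_uminus[OF L] E_uminus[OF f] by simp
  then show ?thesis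
    using add_strict_mono[of "E f" "E (\<lambda>x. C (f x))" "E f" "E (\<lambda>x. C (f x))"] by (meson not_le)
qed

lemma E_max_min:
  assumes a: "L2 M a" and b: "L2 M b"
  shows "E (\<lambda>x. max (a x) (b x)) + E (\<lambda>x. min (a x) (b x)) \<le> E a + E b"
proof -
  have "E (\<lambda>x. (a x + b x) / 2 + \<bar>(a x - b x) / 2\<bar>) + E (\<lambda>x. (a x + b x) / 2 - \<bar>(a x - b x) / 2\<bar>)
     \<le> E (\<lambda>x. (a x + b x) / 2 + (a x - b x) / 2) + E (\<lambda>x. (a x + b x) / 2 - (a x - b x) / 2)"
    by (rule E_contraction_pair[OF L2_divide[OF L2_add[OF a b]] L2_divide[OF L2_diff[OF a b]]])
      (auto simp: abs_triangle_ineq3)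
  moreover have "(\<lambda>x. (a x + b x) / 2 + \<bar>(a x - b x) / 2\<bar>) = (\<lambda>x. max (a x) (b x))"
    and "(\<lambda>x. (a x + b x) / 2 - \<bar>(a x - b x) / 2\<bar>) = (\<lambda>x. min (a x) (b x))"
    and "(\<lambda>x. (a x + b x) / 2 + (a x - b x) / 2) = a"
    and "(\<lambda>x. (a x + b x) / 2 - (a x - b x) / 2) = b"
    by (auto simp: max_def min_def abs_if field_simps)
  ultimately show ?thesis by simp
qed

lemma E_midpoint:
  assumes g1: "L2 M g1" and g2: "L2 M g2"
  shows "2 * E (\<lambda>x. (g1 x + g2 x) / 2) \<le> E g1 + E g2"
proof -
  have half: "(2::ennreal) * ennreal (1 / 2) = 1"
    by (metis ennreal_numeral ennreal_mult' ennreal_1 times_divide_eq_right mult_1_right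
        divide_self_if zero_neq_numeral zero_le_numeral)
  have "(\<lambda>x. 1 / 2 * g1 x + (1 - 1 / 2) * g2 x) = (\<lambda>x. (g1 x + g2 x) / 2)"
    by auto
  then have "E (\<lambda>x. (g1 x + g2 x) / 2) \<le> ennreal (1 / 2) * E g1 + ennreal (1 / 2) * E g2"
    using E_convex[OF g1 g2, of "1 / 2"] by simp
  then have "2 * E (\<lambda>x. (g1 x + g2 x) / 2) \<le> 2 * (ennreal (1 / 2) * E g1 + ennreal (1 / 2) * E g2)"
    by (rule mult_left_mono) simp
  also have "\<dots> = E g1 + E g2"
    using half by (simp add: distrib_left mult.assoc[symmetric])
  finally show ?thesis .
qed

lemma E_truncation_split:
  assumes h: "L2 M h" and c: "0 \<le> c"
  shows "E (\<lambda>x. min (h x) c) + E (\<lambda>x. max (h x - c) 0) \<le> E h"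
proof -
  define C where "C = (\<lambda>y::real. if y \<le> c / 2 then y else c - y)"
  have "E (\<lambda>x. h x / 2 + C (h x / 2)) + E (\<lambda>x. h x / 2 - C (h x / 2))
     \<le> E (\<lambda>x. h x / 2 + h x / 2) + E (\<lambda>x. h x / 2 - h x / 2)"
  proof (rule E_contraction_pair[OF L2_divide[OF h] L2_divide[OF h]])
    show "C 0 = 0" using c by (simp add: C_def)
    show "\<bar>C s - C t\<bar> \<le> \<bar>s - t\<bar>" for s t by (simp add: C_def abs_if split: if_splits)
  qed
  moreover have "(\<lambda>x. h x / 2 + C (h x / 2)) = (\<lambda>x. min (h x) c)"
    by (rule ext) (simp add: C_def min_def field_simps)
  moreover have "(\<lambda>x. h x / 2 - C (h x / 2)) = (\<lambda>x. max (h x - c) 0)"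
    by (rule ext) (simp add: C_def max_def field_simps)
  moreover have "(\<lambda>x. h x / 2 + h x / 2) = h"
    by (rule ext) simp
  ultimately show ?thesis by simp
qed

end

section \<open>Resolvents as minimizers\<close>

lemma integrable_resolvent_distance:
  "L2 M g \<Longrightarrow> L2 M f \<Longrightarrow> integrable M (\<lambda>x. (g x - f x / \<alpha>)\<^sup>2)"
  by (intro L2_integrable_square L2_diff L2_divide)

context nonlinear_dirichlet
begin

definition resolvent_functional :: "real \<Rightarrow> ('a \<Rightarrow> real) \<Rightarrow> ('a \<Rightarrow> real) \<Rightarrow> ennreal" where
  "resolvent_functional \<alpha> f g = E g + ennreal (\<alpha> / 2 * (\<integral>x. (g x - f x / \<alpha>)\<^sup>2 \<partial>M))"

definition resolvent_minimizer :: "real \<Rightarrow> ('a \<Rightarrow> real) \<Rightarrow> ('a \<Rightarrow> real) \<Rightarrow> bool" where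
  "resolvent_minimizer \<alpha> f h \<longleftrightarrow>
     L2 M h \<and> (\<forall>g. L2 M g \<longrightarrow> resolvent_functional \<alpha> f h \<le> resolvent_functional \<alpha> f g)"

lemma resolvent_eq_minimizer: "resolvent M E \<alpha> f = (SOME h. resolvent_minimizer \<alpha> f h)"
  unfolding resolvent_def resolvent_minimizer_def resolvent_functional_def by simp

lemma resolvent_minimizer_L2: "resolvent_minimizer \<alpha> f h \<Longrightarrow> L2 M h"
  by (simp add: resolvent_minimizer_def)

lemma resolvent_minimizer_le:
  "resolvent_minimizer \<alpha> f h \<Longrightarrow> L2 M g \<Longrightarrow>
    E h + ennreal (\<alpha> / 2 * (\<integral>x. (h x - f x / \<alpha>)\<^sup>2 \<partial>M))
    \<le> E g + ennreal (\<alpha> / 2 * (\<integral>x. (g x - f x / \<alpha>)\<^sup>2 \<partial>M))"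
  by (simp add: resolvent_minimizer_def resolvent_functional_def)

lemma resolvent_minimizer_finite_energy:
  assumes "resolvent_minimizer \<alpha> f h"
  shows "E h < \<infinity>"
proof -
  have "E h \<le> resolvent_functional \<alpha> f h"
    by (simp add: resolvent_functional_def)
  also have "\<dots> \<le> resolvent_functional \<alpha> f (\<lambda>x. 0)"
    using assms by (simp add: resolvent_minimizer_def)
  also have "\<dots> < \<infinity>"
    by (simp add: resolvent_functional_def)
  finally show ?thesis .
qed

lemma resolvent_minimizer_compare:
  assumes h: "resolvent_minimizer \<alpha> f h" and \<alpha>: "0 < \<alpha>" and g: "L2 M g"
    and ab: "0 \<le> a" "0 \<le> b" and energy: "E g + ennreal a \<le> E h + ennreal b"
  shows "\<alpha> / 2 * (\<integral>x. (h x - f x / \<alpha>)\<^sup>2 \<partial>M) + a \<le> \<alpha> / 2 * (\<integral>x. (g x - f x / \<alpha>)\<^sup>2 \<partial>M) + b"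
proof -
  define qh where "qh = \<alpha> / 2 * (\<integral>x. (h x - f x / \<alpha>)\<^sup>2 \<partial>M)"
  define qg where "qg = \<alpha> / 2 * (\<integral>x. (g x - f x / \<alpha>)\<^sup>2 \<partial>M)"
  have q: "0 \<le> qh" "0 \<le> qg" unfolding qh_def qg_def using \<alpha> by simp_all
  have "E h + ennreal (qh + a) = (E h + ennreal qh) + ennreal a"
    using q ab by (simp add: ennreal_plus add.assoc)
  also have "\<dots> \<le> (E g + ennreal qg) + ennreal a"
    unfolding qh_def qg_def by (intro add_right_mono resolvent_minimizer_le[OF h g])
  also have "\<dots> = (E g + ennreal a) + ennreal qg"
    by (simp add: ac_simps)
  also have "\<dots> \<le> (E h + ennreal b) + ennreal qg"
    using energy by (rule add_right_mono)
  also have "\<dots> = E h + ennreal (qg + b)"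
    using q ab by (simp add: ennreal_plus ac_simps)
  finally have "ennreal (qh + a) \<le> ennreal (qg + b)"
    using resolvent_minimizer_finite_energy[OF h] by (auto simp: ennreal_add_left_cancel_le)
  then have "qh + a \<le> qg + b"
    using q ab by (simp add: ennreal_le_iff del: ennreal_plus)
  then show ?thesis unfolding qh_def qg_def .
qed

lemma resolvent_functional_parallelogram:
  assumes f: "L2 M f" and g1: "L2 M g1" and g2: "L2 M g2" and \<alpha>: "0 < \<alpha>"
  shows "2 * resolvent_functional \<alpha> f (\<lambda>x. (g1 x + g2 x) / 2)
           + ennreal (\<alpha> / 4 * (\<integral>x. (g1 x - g2 x)\<^sup>2 \<partial>M))
         \<le> resolvent_functional \<alpha> f g1 + resolvent_functional \<alpha> f g2"
proof -
  define mid where "mid = (\<lambda>x. (g1 x + g2 x) / 2)"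
  define q where "q = (\<lambda>g. \<alpha> / 2 * (\<integral>x. (g x - f x / \<alpha>)\<^sup>2 \<partial>M))"
  define d where "d = \<alpha> / 4 * (\<integral>x. (g1 x - g2 x)\<^sup>2 \<partial>M)"
  have q0: "0 \<le> q g" for g unfolding q_def using \<alpha> by simp
  have d0: "0 \<le> d" unfolding d_def using \<alpha> by simp
  have energy: "2 * E mid \<le> E g1 + E g2"
    unfolding mid_def by (rule E_midpoint[OF g1 g2])
  have "q mid = \<alpha> / 2 * (\<integral>x. ((g1 x - f x / \<alpha>)\<^sup>2 + (g2 x - f x / \<alpha>)\<^sup>2) / 2 - (g1 x - g2 x)\<^sup>2 / 4 \<partial>M)"
    unfolding q_def mid_def by (simp add: square_midpoint_diff)
  also have "\<dots> = \<alpha> / 2 * (((\<integral>x. (g1 x - f x / \<alpha>)\<^sup>2 \<partial>M) + (\<integral>x. (g2 x - f x / \<alpha>)\<^sup>2 \<partial>M)) / 2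
      - (\<integral>x. (g1 x - g2 x)\<^sup>2 \<partial>M) / 4)"
    using integrable_resolvent_distance[OF g1 f, of \<alpha>] integrable_resolvent_distance[OF g2 f, of \<alpha>]
      L2_integrable_square[OF L2_diff[OF g1 g2]] by simp
  finally have qmid: "q mid = \<dots>" .
  have parallelogram: "2 * q mid + d = q g1 + q g2"
    unfolding qmid unfolding q_def d_def by (simp add: field_simps)
  have quadratic: "2 * ennreal (q mid) + ennreal d = ennreal (q g1) + ennreal (q g2)"
  proof -
    have "2 * ennreal (q mid) + ennreal d = ennreal (2 * q mid + d)"
      using q0[of mid] d0 by (simp add: ennreal_plus ennreal_mult)
    also have "\<dots> = ennreal (q g1) + ennreal (q g2)"
      using q0 by (simp add: parallelogram ennreal_plus)
    finally show ?thesis .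
  qed
  have "2 * resolvent_functional \<alpha> f mid + ennreal d = 2 * E mid + (2 * ennreal (q mid) + ennreal d)"
    by (simp add: resolvent_functional_def q_def distrib_left ac_simps)
  also have "\<dots> \<le> (E g1 + E g2) + (ennreal (q g1) + ennreal (q g2))"
    unfolding quadratic using energy by (rule add_right_mono)
  also have "\<dots> = resolvent_functional \<alpha> f g1 + resolvent_functional \<alpha> f g2"
    by (simp add: resolvent_functional_def q_def ac_simps)
  finally show ?thesis unfolding mid_def d_def .
qed

lemma resolvent_functional_lsc:
  assumes \<alpha>: "0 < \<alpha>" and f: "L2 M f" and k: "\<And>n. L2 M (k n)" and h: "L2 M h"
    and L2_lim: "(\<lambda>n. \<integral>x. (k n x - h x)\<^sup>2 \<partial>M) \<longlonglongrightarrow> 0"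
    and AE_lim: "AE x in M. (\<lambda>n. k n x) \<longlonglongrightarrow> h x"
  shows "resolvent_functional \<alpha> f h \<le> liminf (\<lambda>n. resolvent_functional \<alpha> f (k n))"
proof -
  have q: "ennreal (\<alpha> / 2 * (\<integral>x. (g x - f x / \<alpha>)\<^sup>2 \<partial>M))
      = (\<integral>\<^sup>+x. ennreal (\<alpha> / 2 * (g x - f x / \<alpha>)\<^sup>2) \<partial>M)" if "L2 M g" for g
    using integrable_resolvent_distance[OF that f, of \<alpha>] \<alpha>
    by (subst nn_integral_eq_integral) auto
  have [measurable]: "k n \<in> borel_measurable M" for n using k by (simp add: L2_def)
  have [measurable]: "f \<in> borel_measurable M" using f by (simp add: L2_def)
  have "ennreal (\<alpha> / 2 * (\<integral>x. (h x - f x / \<alpha>)\<^sup>2 \<partial>M))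
      \<le> liminf (\<lambda>n. ennreal (\<alpha> / 2 * (\<integral>x. (k n x - f x / \<alpha>)\<^sup>2 \<partial>M)))"
    unfolding q[OF h] q[OF k]
    using AE_lim by (intro nn_integral_le_liminf_AE_tendsto) (measurable, auto intro!: tendsto_intros)
  then have "resolvent_functional \<alpha> f h
      \<le> liminf (\<lambda>n. E (k n)) + liminf (\<lambda>n. ennreal (\<alpha> / 2 * (\<integral>x. (k n x - f x / \<alpha>)\<^sup>2 \<partial>M)))"
    unfolding resolvent_functional_def by (intro add_mono E_lsc[OF k h L2_lim])
  also have "\<dots> \<le> liminf (\<lambda>n. resolvent_functional \<alpha> f (k n))"
    unfolding resolvent_functional_def by (rule ennreal_liminf_add_le)
  finally show ?thesis .
qed

lemma resolvent_minimizing_sequence: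
  assumes "L2 M f"
  obtains m k where "\<And>g. L2 M g \<Longrightarrow> m \<le> resolvent_functional \<alpha> f g" "m < \<infinity>"
    "\<And>n. L2 M (k n)" "\<And>n. resolvent_functional \<alpha> f (k n) < m + ennreal (1 / Suc n)"
proof -
  let ?F = "resolvent_functional \<alpha> f"
  define m where "m = (INF g\<in>{g. L2 M g}. ?F g)"
  have m_le: "m \<le> ?F g" if "L2 M g" for g
    unfolding m_def using that by (intro INF_lower) simp
  have "m \<le> ?F (\<lambda>x. 0)" by (rule m_le) simp
  also have "\<dots> < \<infinity>" by (simp add: resolvent_functional_def)
  finally have m_fin: "m < \<infinity>" .
  have "\<exists>g. L2 M g \<and> ?F g < m + ennreal (1 / Suc n)" for n :: nat
  proof -
    have "m < m + ennreal (1 / Suc n)"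
      using ennreal_add_left_cancel_less[of m 0 "ennreal (1 / Suc n)"] m_fin by simp
    then have "(INF g\<in>{g. L2 M g}. ?F g) < m + ennreal (1 / Suc n)"
      by (metis m_def)
    then show ?thesis by (simp add: INF_less_iff)
  qed
  then obtain k where "\<And>n. L2 M (k n)" "\<And>n. ?F (k n) < m + ennreal (1 / Suc n)"
    by metis
  with m_le m_fin show ?thesis by (rule that)
qed

lemma resolvent_minimizing_sequence_dist:
  assumes \<alpha>: "0 < \<alpha>" and f: "L2 M f"
    and m_le: "\<And>g. L2 M g \<Longrightarrow> m \<le> resolvent_functional \<alpha> f g" and m_fin: "m < \<infinity>"
    and k: "\<And>n. L2 M (k n)" and k_less: "\<And>n. resolvent_functional \<alpha> f (k n) < m + ennreal (1 / Suc n)"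
  shows "(\<integral>x. (k i x - k j x)\<^sup>2 \<partial>M) \<le> 4 / \<alpha> * (1 / Suc i + 1 / Suc j)"
proof -
  let ?F = "resolvent_functional \<alpha> f"
  have "2 * m + ennreal (\<alpha> / 4 * (\<integral>x. (k i x - k j x)\<^sup>2 \<partial>M))
      \<le> 2 * ?F (\<lambda>x. (k i x + k j x) / 2) + ennreal (\<alpha> / 4 * (\<integral>x. (k i x - k j x)\<^sup>2 \<partial>M))"
    by (intro add_right_mono mult_left_mono m_le L2_divide L2_add k) simp
  also have "\<dots> \<le> ?F (k i) + ?F (k j)"
    by (rule resolvent_functional_parallelogram[OF f k k \<alpha>])
  also have "\<dots> \<le> (m + ennreal (1 / Suc i)) + (m + ennreal (1 / Suc j))"
    using k_less by (intro add_mono less_imp_le)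
  also have "\<dots> = 2 * m + ennreal (1 / Suc i + 1 / Suc j)"
    by (simp add: mult_2 ennreal_plus)
  finally have "ennreal (\<alpha> / 4 * (\<integral>x. (k i x - k j x)\<^sup>2 \<partial>M)) \<le> ennreal (1 / Suc i + 1 / Suc j)"
    using m_fin by (auto simp: ennreal_add_left_cancel_le ennreal_mult_eq_top_iff)
  then have "\<alpha> / 4 * (\<integral>x. (k i x - k j x)\<^sup>2 \<partial>M) \<le> 1 / Suc i + 1 / Suc j"
    by (subst (asm) ennreal_le_iff) auto
  then have "4 / \<alpha> * (\<alpha> / 4 * (\<integral>x. (k i x - k j x)\<^sup>2 \<partial>M)) \<le> 4 / \<alpha> * (1 / Suc i + 1 / Suc j)"
    using \<alpha> by (intro mult_left_mono) auto
  then show ?thesis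
    using \<alpha> by simp
qed

lemma resolvent_minimizer_exists:
  assumes \<alpha>: "0 < \<alpha>" and f: "L2 M f"
  shows "\<exists>h. resolvent_minimizer \<alpha> f h"
proof -
  let ?F = "resolvent_functional \<alpha> f"
  obtain m k where m_le: "\<And>g. L2 M g \<Longrightarrow> m \<le> ?F g" and m_fin: "m < \<infinity>"
    and k: "\<And>n. L2 M (k n)" and k_less: "\<And>n. ?F (k n) < m + ennreal (1 / Suc n)"
    using resolvent_minimizing_sequence[OF f] by metis
  have Cauchy: "\<exists>N. \<forall>i\<ge>N. \<forall>j\<ge>N. (\<integral>x. (k i x - k j x)\<^sup>2 \<partial>M) < e" if "0 < e" for e
    using \<alpha> that resolvent_minimizing_sequence_dist[OF \<alpha> f m_le m_fin k k_less]
    by (intro Cauchy_of_inverse_bound[where c = "4 / \<alpha>"]) auto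
  obtain r h where r: "strict_mono r" and [measurable]: "h \<in> borel_measurable M"
    and AE_lim: "AE x in M. (\<lambda>n. k (r n) x) \<longlonglongrightarrow> h x"
    by (rule L2_Cauchy_AE_convergent_subseq[OF k Cauchy])
  have h: "L2 M h" and L2_lim: "(\<lambda>n. \<integral>x. (k n x - h x)\<^sup>2 \<partial>M) \<longlonglongrightarrow> 0"
    using L2_limit_of_Cauchy[OF k Cauchy r _ AE_lim] by auto
  have F_lim: "(\<lambda>n. ?F (k n)) \<longlonglongrightarrow> m"
  proof (rule tendsto_sandwich[of "\<lambda>n. m" _ _ "\<lambda>n. m + ennreal (1 / Suc n)"])
    show "\<forall>\<^sub>F n in sequentially. ?F (k n) \<le> m + ennreal (1 / Suc n)"
      using k_less by (simp add: less_imp_le)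
    have "(\<lambda>n. ennreal (1 / Suc n)) \<longlonglongrightarrow> 0"
      using tendsto_ennrealI[OF LIMSEQ_inverse_real_of_nat] by (simp add: inverse_eq_divide)
    then show "(\<lambda>n. m + ennreal (1 / Suc n)) \<longlonglongrightarrow> m"
      using tendsto_add[OF tendsto_const[of m]] by fastforce
  qed (use m_le[OF k] in simp_all)
  have "?F h \<le> liminf (\<lambda>n. ?F (k (r n)))"
    using LIMSEQ_subseq_LIMSEQ[OF L2_lim r] AE_lim k
    by (intro resolvent_functional_lsc[OF \<alpha> f _ h]) (auto simp: o_def)
  also have "\<dots> = m"
    using LIMSEQ_subseq_LIMSEQ[OF F_lim r] by (intro lim_imp_Liminf) (auto simp: o_def)
  finally show ?thesis
    using h m_le unfolding resolvent_minimizer_def by (blast intro: order_trans)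
qed

lemma resolvent_minimizer_resolvent:
  assumes "0 < \<alpha>" "L2 M f"
  shows "resolvent_minimizer \<alpha> f (resolvent M E \<alpha> f)"
  unfolding resolvent_eq_minimizer by (rule someI_ex[OF resolvent_minimizer_exists[OF assms]])

end

section \<open>Comparison properties of resolvents\<close>

context nonlinear_dirichlet
begin

lemma resolvent_minimizer_zero:
  assumes h: "resolvent_minimizer \<alpha> (\<lambda>x. 0) h" and \<alpha>: "0 < \<alpha>"
  shows "AE x in M. h x = 0"
proof -
  have "\<alpha> / 2 * (\<integral>x. (h x - 0 / \<alpha>)\<^sup>2 \<partial>M) + 0 \<le> \<alpha> / 2 * (\<integral>x. (0 - 0 / \<alpha>)\<^sup>2 \<partial>M) + 0"
    by (rule resolvent_minimizer_compare[OF h \<alpha>]) auto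
  then have "(\<integral>x. (h x)\<^sup>2 \<partial>M) = 0"
    using \<alpha> by (simp add: mult_le_0_iff order_antisym)
  then have "AE x in M. (h x)\<^sup>2 = 0"
    using integral_nonneg_eq_0_iff_AE[OF L2_integrable_square[OF resolvent_minimizer_L2[OF h]]] by simp
  then show ?thesis by simp
qed

lemma resolvent_minimizer_nonneg:
  assumes h: "resolvent_minimizer \<alpha> f h" and \<alpha>: "0 < \<alpha>" and f: "L2 M f"
    and f_nonneg: "\<And>x. x \<in> space M \<Longrightarrow> 0 \<le> f x"
  shows "AE x in M. 0 \<le> h x"
proof -
  have L: "L2 M h" by (rule resolvent_minimizer_L2[OF h])
  define hp where "hp = (\<lambda>x. max (h x) 0)"
  have Lhp: "L2 M hp" unfolding hp_def by (rule L2_max[OF L L2_zero])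
  have "E hp \<le> E h" unfolding hp_def
  proof (rule E_normal_contraction[OF L])
    show "\<bar>max s 0 - max t 0\<bar> \<le> \<bar>s - t\<bar>" for s t :: real by (simp add: max_def abs_if)
    show "(\<lambda>x. max (h x) 0) \<in> borel_measurable M" using L2_borel_measurable[OF L] by measurable
  qed simp
  then have "\<alpha> / 2 * (\<integral>x. (h x - f x / \<alpha>)\<^sup>2 \<partial>M) + 0 \<le> \<alpha> / 2 * (\<integral>x. (hp x - f x / \<alpha>)\<^sup>2 \<partial>M) + 0"
    by (intro resolvent_minimizer_compare[OF h \<alpha> Lhp]) auto
  then have le: "(\<integral>x. (h x - f x / \<alpha>)\<^sup>2 \<partial>M) \<le> (\<integral>x. (hp x - f x / \<alpha>)\<^sup>2 \<partial>M)"
    using \<alpha> by simp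
  have "(\<integral>x. (min (h x) 0)\<^sup>2 \<partial>M) \<le> (\<integral>x. (h x - f x / \<alpha>)\<^sup>2 - (hp x - f x / \<alpha>)\<^sup>2 \<partial>M)"
    using L2_integrable_square[OF L2_min[OF L L2_zero]] integrable_resolvent_distance[OF L f]
      integrable_resolvent_distance[OF Lhp f] square_min_zero_le_diff f_nonneg \<alpha>
    by (intro integral_mono) (auto simp: hp_def)
  also have "\<dots> \<le> 0"
    using integrable_resolvent_distance[OF L f] integrable_resolvent_distance[OF Lhp f] le by simp
  finally have "(\<integral>x. (min (h x) 0)\<^sup>2 \<partial>M) = 0"
    by (simp add: order_antisym)
  then have "AE x in M. (min (h x) 0)\<^sup>2 = 0"
    using integral_nonneg_eq_0_iff_AE[OF L2_integrable_square[OF L2_min[OF L L2_zero]]] by simp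
  then show ?thesis
    by (rule eventually_mono) (auto simp: min_def split: if_splits)
qed

lemma resolvent_minimizer_test_inequality:
  assumes h: "resolvent_minimizer \<alpha> f h" and \<alpha>: "0 < \<alpha>" and f: "L2 M f" and u: "L2 M u"
  shows "ennreal (\<integral>x. f x * max (u x - h x) 0 \<partial>M) \<le> E u + ennreal (\<alpha> / 2 * (\<integral>x. (u x)\<^sup>2 \<partial>M))"
proof (cases "E u = \<infinity>")
  case False
  then obtain eu where eu: "E u = ennreal eu" "0 \<le> eu" by (cases "E u") auto
  have L: "L2 M h" by (rule resolvent_minimizer_L2[OF h])
  define hu where "hu = (\<lambda>x. max (h x) (u x))"
  have Lhu: "L2 M hu" unfolding hu_def by (rule L2_max[OF L u])
  have "E hu \<le> E h + E u"
    using E_max_min[OF L u] unfolding hu_def by (metis add_increasing2 le_iff_add order_trans zero_le)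
  then have compare: "\<alpha> / 2 * (\<integral>x. (h x - f x / \<alpha>)\<^sup>2 \<partial>M) + 0
      \<le> \<alpha> / 2 * (\<integral>x. (hu x - f x / \<alpha>)\<^sup>2 \<partial>M) + eu"
    using eu by (intro resolvent_minimizer_compare[OF h \<alpha> Lhu]) auto
  have i1: "integrable M (\<lambda>x. f x * max (u x - h x) 0)"
    using L2_integrable_mult[OF f L2_max[OF L2_diff[OF u L] L2_zero]] .
  have "(\<integral>x. f x * max (u x - h x) 0 \<partial>M) - \<alpha> / 2 * (\<integral>x. (u x)\<^sup>2 \<partial>M)
      = (\<integral>x. f x * max (u x - h x) 0 - \<alpha> / 2 * (u x)\<^sup>2 \<partial>M)"
    using i1 L2_integrable_square[OF u] by simp
  also have "\<dots> \<le> (\<integral>x. \<alpha> / 2 * (h x - f x / \<alpha>)\<^sup>2 - \<alpha> / 2 * (hu x - f x / \<alpha>)\<^sup>2 \<partial>M)"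
    using i1 L2_integrable_square[OF u] integrable_resolvent_distance[OF L f]
      integrable_resolvent_distance[OF Lhu f] max_competitor_pointwise[OF \<alpha>]
    by (intro integral_mono) (auto simp: hu_def)
  also have "\<dots> = \<alpha> / 2 * (\<integral>x. (h x - f x / \<alpha>)\<^sup>2 \<partial>M) - \<alpha> / 2 * (\<integral>x. (hu x - f x / \<alpha>)\<^sup>2 \<partial>M)"
    using integrable_resolvent_distance[OF L f] integrable_resolvent_distance[OF Lhu f] by simp
  finally have "(\<integral>x. f x * max (u x - h x) 0 \<partial>M) \<le> eu + \<alpha> / 2 * (\<integral>x. (u x)\<^sup>2 \<partial>M)"
    using compare by linarith
  then show ?thesis
    using eu \<alpha> by (simp add: ennreal_plus[symmetric] ennreal_leI del: ennreal_plus)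
qed simp

lemma resolvent_minimizer_truncation_energy:
  assumes h: "resolvent_minimizer \<alpha> f h" and \<alpha>: "0 < \<alpha>" and f: "L2 M f" "integrable M f"
    and f_nonneg: "\<And>x. x \<in> space M \<Longrightarrow> 0 \<le> f x" and c: "0 \<le> c"
  shows "E (\<lambda>x. min (h x) c) \<le> ennreal (c * (\<integral>x. f x \<partial>M))"
proof -
  have L: "L2 M h" by (rule resolvent_minimizer_L2[OF h])
  define w where "w = (\<lambda>x. max (h x - c) 0)"
  have Lw: "L2 M w" unfolding w_def
    by (rule L2_dominated[OF _ L]) (use c L2_borel_measurable[OF L] in \<open>auto simp: max_def abs_if\<close>)
  have split: "E (\<lambda>x. min (h x) c) + E w \<le> E h"
    unfolding w_def by (rule E_truncation_split[OF L c])
  have "E (\<lambda>x. min (h x) c) \<le> E h"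
    using order_trans[OF add_increasing2[OF zero_le order_refl] split] .
  then obtain t where t: "E (\<lambda>x. min (h x) c) = ennreal t" "0 \<le> t"
    using resolvent_minimizer_finite_energy[OF h] by (cases "E (\<lambda>x. min (h x) c)") auto
  have "\<alpha> / 2 * (\<integral>x. (h x - f x / \<alpha>)\<^sup>2 \<partial>M) + t \<le> \<alpha> / 2 * (\<integral>x. (w x - f x / \<alpha>)\<^sup>2 \<partial>M) + 0"
    using split t by (intro resolvent_minimizer_compare[OF h \<alpha> Lw]) (auto simp: add.commute)
  moreover have "- (c * (\<integral>x. f x \<partial>M))
      \<le> (\<integral>x. \<alpha> / 2 * (h x - f x / \<alpha>)\<^sup>2 - \<alpha> / 2 * (w x - f x / \<alpha>)\<^sup>2 \<partial>M)"
  proof -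
    have "AE x in M. 0 \<le> h x"
      by (rule resolvent_minimizer_nonneg[OF h \<alpha> f(1)]) (rule f_nonneg)
    then have "AE x in M. - (c * f x) \<le> \<alpha> / 2 * (h x - f x / \<alpha>)\<^sup>2 - \<alpha> / 2 * (w x - f x / \<alpha>)\<^sup>2"
    proof (rule AE_mp, intro AE_I2 impI)
      fix x assume x: "x \<in> space M" and hx: "0 \<le> h x"
      show "- (c * f x) \<le> \<alpha> / 2 * (h x - f x / \<alpha>)\<^sup>2 - \<alpha> / 2 * (w x - f x / \<alpha>)\<^sup>2"
        unfolding w_def by (rule truncation_competitor_pointwise[OF \<alpha> hx f_nonneg[OF x] c])
    qed
    then have "(\<integral>x. - (c * f x) \<partial>M)
        \<le> (\<integral>x. \<alpha> / 2 * (h x - f x / \<alpha>)\<^sup>2 - \<alpha> / 2 * (w x - f x / \<alpha>)\<^sup>2 \<partial>M)"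
      using f(2) integrable_resolvent_distance[OF L f(1)] integrable_resolvent_distance[OF Lw f(1)]
      by (intro integral_mono_AE) auto
    then show ?thesis by simp
  qed
  moreover have "(\<integral>x. \<alpha> / 2 * (h x - f x / \<alpha>)\<^sup>2 - \<alpha> / 2 * (w x - f x / \<alpha>)\<^sup>2 \<partial>M)
      = \<alpha> / 2 * (\<integral>x. (h x - f x / \<alpha>)\<^sup>2 \<partial>M) - \<alpha> / 2 * (\<integral>x. (w x - f x / \<alpha>)\<^sup>2 \<partial>M)"
    using integrable_resolvent_distance[OF L f(1)] integrable_resolvent_distance[OF Lw f(1)] by simp
  ultimately have "t \<le> c * (\<integral>x. f x \<partial>M)"
    by linarith
  then show ?thesis
    unfolding t by (rule ennreal_leI)
qed

lemma resolvent_minimizers_exchange: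
  assumes ha: "resolvent_minimizer \<alpha> f ha" and hb: "resolvent_minimizer \<beta> f hb"
    and \<alpha>: "0 < \<alpha>" and \<beta>: "0 < \<beta>" and f: "L2 M f"
  shows "(\<integral>x. \<alpha> / 2 * (ha x - f x / \<alpha>)\<^sup>2 + \<beta> / 2 * (hb x - f x / \<beta>)\<^sup>2 \<partial>M)
    \<le> (\<integral>x. \<alpha> / 2 * (max (ha x) (hb x) - f x / \<alpha>)\<^sup>2 + \<beta> / 2 * (min (ha x) (hb x) - f x / \<beta>)\<^sup>2 \<partial>M)"
proof -
  have La: "L2 M ha" and Lb: "L2 M hb"
    using ha hb by (simp_all add: resolvent_minimizer_def)
  define mx where "mx = (\<lambda>x. max (ha x) (hb x))"
  define mn where "mn = (\<lambda>x. min (ha x) (hb x))"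
  have Lmx: "L2 M mx" and Lmn: "L2 M mn"
    unfolding mx_def mn_def by (simp_all add: L2_max L2_min La Lb)
  define qa where "qa = (\<lambda>g. \<alpha> / 2 * (\<integral>x. (g x - f x / \<alpha>)\<^sup>2 \<partial>M))"
  define qb where "qb = (\<lambda>g. \<beta> / 2 * (\<integral>x. (g x - f x / \<beta>)\<^sup>2 \<partial>M))"
  have q0: "0 \<le> qa g" "0 \<le> qb g" for g
    unfolding qa_def qb_def using \<alpha> \<beta> by simp_all
  have "(E ha + E hb) + ennreal (qa ha + qb hb) = (E ha + ennreal (qa ha)) + (E hb + ennreal (qb hb))"
    using q0 by (simp add: ennreal_plus ac_simps)
  also have "\<dots> \<le> (E mx + ennreal (qa mx)) + (E mn + ennreal (qb mn))"
    unfolding qa_def qb_def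
    by (intro add_mono resolvent_minimizer_le[OF ha Lmx] resolvent_minimizer_le[OF hb Lmn])
  also have "\<dots> = (E mx + E mn) + ennreal (qa mx + qb mn)"
    using q0 by (simp add: ennreal_plus ac_simps)
  also have "\<dots> \<le> (E ha + E hb) + ennreal (qa mx + qb mn)"
    unfolding mx_def mn_def by (intro add_right_mono E_max_min[OF La Lb])
  finally have "qa ha + qb hb \<le> qa mx + qb mn"
    using resolvent_minimizer_finite_energy[OF ha] resolvent_minimizer_finite_energy[OF hb] q0
    by (auto simp: ennreal_add_left_cancel_le ennreal_le_iff add_nonneg_nonneg simp del: ennreal_plus)
  then show ?thesis
    unfolding qa_def qb_def mx_def mn_def
    using integrable_resolvent_distance[OF La f] integrable_resolvent_distance[OF Lb f]
      integrable_resolvent_distance[OF Lmx f] integrable_resolvent_distance[OF Lmn f]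
    by (simp add: mx_def mn_def)
qed

text \<open>By the exchange inequality the integral of the function \<open>D\<close> below is nonnegative,
  while \<open>D < 0\<close> wherever \<open>0 \<le> h\<^sub>\<alpha> < h\<^sub>\<beta>\<close>.\<close>

lemma resolvent_minimizer_antitone:
  assumes ha: "resolvent_minimizer \<alpha> f ha" and hb: "resolvent_minimizer \<beta> f hb"
    and \<alpha>: "0 < \<alpha>" and \<alpha>\<beta>: "\<alpha> < \<beta>" and f: "L2 M f"
    and f_nonneg: "\<And>x. x \<in> space M \<Longrightarrow> 0 \<le> f x"
  shows "AE x in M. hb x \<le> ha x"
proof -
  have \<beta>: "0 < \<beta>" using \<alpha> \<alpha>\<beta> by simp
  have La: "L2 M ha" and Lb: "L2 M hb"
    using ha hb by (simp_all add: resolvent_minimizer_def)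
  define D where "D = (\<lambda>x. \<alpha> / 2 * (max (ha x) (hb x) - f x / \<alpha>)\<^sup>2 + \<beta> / 2 * (min (ha x) (hb x) - f x / \<beta>)\<^sup>2
          - \<alpha> / 2 * (ha x - f x / \<alpha>)\<^sup>2 - \<beta> / 2 * (hb x - f x / \<beta>)\<^sup>2)"
  have D_int: "integrable M D" and D_nonneg: "0 \<le> (\<integral>x. D x \<partial>M)"
    unfolding D_def
    using resolvent_minimizers_exchange[OF ha hb \<alpha> \<beta> f]
      integrable_resolvent_distance[OF La f] integrable_resolvent_distance[OF Lb f]
      integrable_resolvent_distance[OF L2_max[OF La Lb] f] integrable_resolvent_distance[OF L2_min[OF La Lb] f]
    by (simp_all add: algebra_simps)
  have D_eq: "D x = (if ha x < hb x then (\<beta> - \<alpha>) / 2 * ((ha x)\<^sup>2 - (hb x)\<^sup>2) else 0)" for x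
    unfolding D_def by (rule max_min_exchange_pointwise[OF \<alpha> \<beta>])
  have ha_nonneg: "AE x in M. 0 \<le> ha x"
    by (rule resolvent_minimizer_nonneg[OF ha \<alpha> f]) (rule f_nonneg)
  have D_nonpos: "AE x in M. 0 \<le> - D x"
    using ha_nonneg
  proof (rule AE_mp, intro AE_I2 impI)
    fix x assume "0 \<le> ha x"
    then have "ha x < hb x \<Longrightarrow> (ha x)\<^sup>2 \<le> (hb x)\<^sup>2" by (intro power_mono) auto
    then show "0 \<le> - D x"
      unfolding D_eq using \<alpha>\<beta> by (auto intro: mult_nonneg_nonpos)
  qed
  have "(\<integral>x. - D x \<partial>M) = 0"
    using integral_nonneg_AE[OF D_nonpos] D_nonneg by simp
  then have "AE x in M. - D x = 0"
    using integral_nonneg_eq_0_iff_AE[of M "\<lambda>x. - D x"] D_int D_nonpos by simp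
  then show ?thesis
    using ha_nonneg
  proof (rule AE_mp[OF _ AE_mp], intro AE_I2 impI)
    fix x assume "- D x = 0" "0 \<le> ha x"
    show "hb x \<le> ha x"
    proof (rule ccontr)
      assume "\<not> hb x \<le> ha x"
      then have "(ha x)\<^sup>2 < (hb x)\<^sup>2" and "ha x < hb x"
        using \<open>0 \<le> ha x\<close> by (auto intro: power_strict_mono)
      then have "D x < 0" unfolding D_eq using \<alpha>\<beta> by (simp add: mult_pos_neg)
      then show False using \<open>- D x = 0\<close> by simp
    qed
  qed
qed

end

section \<open>Modular spaces and the Luxemburg seminorm\<close>

lemma luxemburg_le:
  fixes E' :: "('a \<Rightarrow> real) \<Rightarrow> ennreal" and f :: "'a \<Rightarrow> real"
  assumes "0 < s" "E' (\<lambda>x. f x / s) \<le> 1"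
  shows "luxemburg E' f \<le> s"
  unfolding luxemburg_def by (rule cInf_lower) (use assms in \<open>auto intro!: bdd_belowI[of _ 0]\<close>)

lemma luxemburg_nonneg:
  fixes E' :: "('a \<Rightarrow> real) \<Rightarrow> ennreal" and f :: "'a \<Rightarrow> real"
  assumes "\<exists>s>0. E' (\<lambda>x. f x / s) \<le> 1"
  shows "0 \<le> luxemburg E' f"
  unfolding luxemburg_def by (rule cInf_greatest) (use assms in auto)

lemma luxemburg_less_imp:
  fixes E' :: "('a \<Rightarrow> real) \<Rightarrow> ennreal" and f :: "'a \<Rightarrow> real"
  assumes "\<exists>s>0. E' (\<lambda>x. f x / s) \<le> 1" and "luxemburg E' f < d"
  shows "\<exists>s>0. s < d \<and> E' (\<lambda>x. f x / s) \<le> 1"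
  using cInf_lessD[of "{s. 0 < s \<and> E' (\<lambda>x. f x / s) \<le> 1}" d] assms
  unfolding luxemburg_def by auto

lemma unit_ball_of_modular:
  fixes E' :: "('a \<Rightarrow> real) \<Rightarrow> ennreal" and f :: "'a \<Rightarrow> real"
  assumes "((\<lambda>t. E' (\<lambda>x. t * f x)) \<longlongrightarrow> 0) (at_right 0)"
  shows "\<exists>s>0. E' (\<lambda>x. f x / s) \<le> 1"
proof -
  have "eventually (\<lambda>t. E' (\<lambda>x. t * f x) < 1) (at_right (0::real))"
    using assms by (rule order_tendstoD) simp
  then obtain b :: real where b: "0 < b" "\<And>t. 0 < t \<Longrightarrow> t < b \<Longrightarrow> E' (\<lambda>x. t * f x) < 1"
    unfolding eventually_at_right_field by blast
  then have "E' (\<lambda>x. f x / (2 / b)) \<le> 1"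
    using b(2)[of "b / 2"] by (simp add: field_simps)
  then show ?thesis using b(1) by (intro exI[of _ "2 / b"]) auto
qed

lemma luxemburg_nonneg_modular: "f \<in> modular_space M E \<Longrightarrow> 0 \<le> luxemburg E f"
  by (intro luxemburg_nonneg unit_ball_of_modular) (simp add: modular_space_def)

context nonlinear_dirichlet
begin

lemma energy_le_of_luxemburg_less:
  assumes e: "e \<in> modular_space M E" and lux: "luxemburg E e < d" and c: "0 < c" "c * d \<le> 1"
  shows "E (\<lambda>x. c * e x) \<le> ennreal (c * d)"
proof -
  have "\<exists>s>0. E (\<lambda>x. e x / s) \<le> 1"
    using e by (intro unit_ball_of_modular) (simp add: modular_space_def)
  then obtain s where s: "0 < s" "s < d" "E (\<lambda>x. e x / s) \<le> 1"
    using luxemburg_less_imp[OF _ lux] by blast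
  have "c * s \<le> c * d" using s c by (intro mult_left_mono) auto
  then have cs: "0 \<le> c * s" "c * s \<le> 1" using s c by (simp, linarith)
  have "E (\<lambda>x. c * e x) = E (\<lambda>x. (c * s) * (e x / s))"
    using s by simp
  also have "\<dots> \<le> ennreal (c * s) * E (\<lambda>x. e x / s)"
    using e cs by (intro E_scale L2_divide) (simp_all add: modular_space_def)
  also have "\<dots> \<le> ennreal (c * s)"
    using mult_left_mono[OF s(3), of "ennreal (c * s)"] by simp
  also have "\<dots> \<le> ennreal (c * d)"
    using s c by (intro ennreal_leI) simp
  finally show ?thesis .
qed

lemma energy_tendsto_zero_of_luxemburg:
  assumes e: "\<And>n. e n \<in> modular_space M E" and lux: "(\<lambda>n. luxemburg E (e n)) \<longlonglongrightarrow> 0"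
    and c: "0 < c"
  shows "(\<lambda>n. E (\<lambda>x. c * e n x)) \<longlonglongrightarrow> 0"
proof (rule order_tendstoI)
  fix y :: ennreal assume "0 < y"
  then obtain \<delta> :: real where \<delta>: "0 < \<delta>" "ennreal \<delta> < y"
    by (metis ennreal_less_zero_iff ennreal_rat_dense less_ennreal.abs_eq dense)
  define d where "d = min (1 / c) (\<delta> / c) / 2"
  have d: "0 < d" "c * d \<le> 1" "c * d \<le> \<delta>"
    unfolding d_def using c \<delta> by (auto simp: field_simps min_def)
  have "eventually (\<lambda>n. luxemburg E (e n) < d) sequentially"
    using order_tendstoD(2)[OF lux d(1)] .
  then show "eventually (\<lambda>n. E (\<lambda>x. c * e n x) < y) sequentially"
  proof eventually_elim
    case (elim n)
    have "E (\<lambda>x. c * e n x) \<le> ennreal (c * d)"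
      by (rule energy_le_of_luxemburg_less[OF e elim c d(2)])
    also have "\<dots> \<le> ennreal \<delta>" using d(3) by (rule ennreal_leI)
    finally show ?case using \<delta>(2) by simp
  qed
qed simp

lemma scaled_modular_of_bounded_energy:
  assumes v: "L2 M v" and energy: "E v \<le> ennreal b" and b: "1 \<le> b" and c: "0 < c"
  shows "(\<lambda>x. v x / c) \<in> modular_space M E" and "luxemburg E (\<lambda>x. v x / c) \<le> b / c"
proof -
  have scale: "E (\<lambda>x. t * v x) \<le> ennreal (t * b)" if "0 \<le> t" "t \<le> 1" for t
  proof -
    have "E (\<lambda>x. t * v x) \<le> ennreal t * E v" by (rule E_scale[OF v that])
    also have "\<dots> \<le> ennreal t * ennreal b" using energy by (rule mult_left_mono) simp
    finally show ?thesis using that b by (simp add: ennreal_mult)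
  qed
  have "((\<lambda>t. E (\<lambda>x. t * (v x / c))) \<longlongrightarrow> 0) (at_right 0)"
  proof (rule tendsto_sandwich[of "\<lambda>t. 0" _ _ "\<lambda>t. ennreal (t / c * b)"])
    have "\<forall>\<^sub>F t in at_right 0. 0 < t \<and> t < c"
      using c by (auto simp: eventually_at_right_field intro: exI[of _ c])
    then show "\<forall>\<^sub>F t in at_right 0. E (\<lambda>x. t * (v x / c)) \<le> ennreal (t / c * b)"
    proof eventually_elim
      case (elim t)
      have "(\<lambda>x. t * (v x / c)) = (\<lambda>x. t / c * v x)" by auto
      then show ?case using scale[of "t / c"] elim c by simp
    qed
    have "((\<lambda>t. t / c * b) \<longlongrightarrow> 0 / c * b) (at_right (0::real))"
      using c by (intro tendsto_intros) auto
    then show "((\<lambda>t. ennreal (t / c * b)) \<longlongrightarrow> 0) (at_right 0)"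
      using tendsto_ennrealI by fastforce
  qed simp_all
  then show "(\<lambda>x. v x / c) \<in> modular_space M E"
    unfolding modular_space_def using L2_divide[OF v] by simp
  have "E (\<lambda>x. v x / c / (b / c)) = E (\<lambda>x. (1 / b) * v x)"
    using c b by simp
  also have "\<dots> \<le> 1"
    using scale[of "1 / b"] b by simp
  finally show "luxemburg E (\<lambda>x. v x / c) \<le> b / c"
    using b c by (intro luxemburg_le) auto
qed

lemma normalized_truncation:
  assumes w: "L2 M w" and c: "0 < c" and b: "1 \<le> b"
    and energy: "E (\<lambda>x. max 0 (min (w x) c)) \<le> ennreal b"
  defines "e \<equiv> \<lambda>x. max 0 (min (w x) c) / c"
  shows "e \<in> modular_space M E" and "\<And>x. 0 \<le> e x \<and> e x \<le> 1"
    and "luxemburg E e \<le> b / c"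
    and "\<And>x \<delta>. 0 \<le> \<delta> \<Longrightarrow> \<delta> < \<bar>e x - 1\<bar> \<Longrightarrow> w x < c * (1 - \<delta>)"
proof -
  have "L2 M (\<lambda>x. max 0 (min (w x) c))"
    using c L2_borel_measurable[OF w]
    by (intro L2_dominated[OF _ w]) (auto simp: max_def min_def abs_if)
  then show "e \<in> modular_space M E" and "luxemburg E e \<le> b / c"
    unfolding e_def using scaled_modular_of_bounded_energy[OF _ energy b c] by auto
  show "0 \<le> e x \<and> e x \<le> 1" for x
    using c unfolding e_def by auto
  show "w x < c * (1 - \<delta>)" if "0 \<le> \<delta>" "\<delta> < \<bar>e x - 1\<bar>" for x \<delta>
    using clip_deviation_imp_less[OF c that(1)] that(2) unfolding e_def by simp
qed

end

section \<open>Approximations of the unit\<close>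

definition approximating_units :: "'a measure \<Rightarrow> (('a \<Rightarrow> real) \<Rightarrow> ennreal) \<Rightarrow> (nat \<Rightarrow> 'a \<Rightarrow> real) \<Rightarrow> bool"
  where "approximating_units M E e \<longleftrightarrow>
    (\<forall>n. e n \<in> modular_space M E) \<and> (\<forall>n. \<forall>x\<in>space M. 0 \<le> e n x \<and> e n x \<le> 1) \<and>
    conv_loc_meas M e (\<lambda>x. 1) \<and> (\<lambda>n. luxemburg E (e n)) \<longlonglongrightarrow> 0"

definition unit_locally_approximable :: "'a measure \<Rightarrow> (('a \<Rightarrow> real) \<Rightarrow> ennreal) \<Rightarrow> bool"
  where "unit_locally_approximable M E \<longleftrightarrow>
    (\<forall>A\<in>sets M. emeasure M A < \<infinity> \<longrightarrow> (\<forall>\<epsilon>>0. \<exists>e\<in>modular_space M E.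
       (\<forall>x\<in>space M. 0 \<le> e x \<and> e x \<le> 1) \<and> luxemburg E e \<le> \<epsilon> \<and>
       emeasure M (A \<inter> {x\<in>space M. \<epsilon> < \<bar>e x - 1\<bar>}) \<le> ennreal \<epsilon>))"

lemma emeasure_le_add_of_subset_Un:
  "B \<subseteq> S \<union> T \<Longrightarrow> S \<in> sets M \<Longrightarrow> T \<in> sets M \<Longrightarrow> emeasure M B \<le> emeasure M S + emeasure M T"
  by (metis emeasure_mono emeasure_subadditive order_trans sets.Un)

lemma conv_loc_meas_of_exhaustion:
  assumes A: "range A \<subseteq> sets M" "(\<Union>i. A i) = space M" "\<And>i. emeasure M (A i) \<noteq> \<infinity>" "incseq A"
    and [measurable]: "\<And>m. e m \<in> borel_measurable M" "f \<in> borel_measurable M"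
    and small: "\<And>m. emeasure M (A m \<inter> {x\<in>space M. 1 / Suc m < \<bar>e m x - f x\<bar>}) \<le> ennreal (1 / Suc m)"
  shows "conv_loc_meas M e f"
  unfolding conv_loc_meas_def
proof (intro ballI impI allI)
  fix B \<epsilon> assume B: "B \<in> sets M" "emeasure M B < \<infinity>" and \<epsilon>: "(0::real) < \<epsilon>"
  have [measurable]: "B \<in> sets M" "A i \<in> sets M" for i using B(1) A(1) by auto
  have lim: "(\<lambda>n. emeasure M (B - A n)) \<longlonglongrightarrow> emeasure M (\<Inter>n. B - A n)"
  proof (rule Lim_emeasure_decseq)
    show "emeasure M (B - A i) \<noteq> \<infinity>" for i
      using B emeasure_mono[of "B - A i" B M] by (auto simp: top_unique)
  qed (use A(4) B in \<open>auto simp: decseq_def incseq_def\<close>)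
  have "(\<Inter>n. B - A n) = {}"
    using A(2) sets.sets_into_space[OF B(1)] by auto
  with lim have outside: "(\<lambda>n. emeasure M (B - A n)) \<longlonglongrightarrow> 0"
    by (simp only: emeasure_empty)
  have inverse: "(\<lambda>n. ennreal (1 / Suc n)) \<longlonglongrightarrow> 0"
    using tendsto_ennrealI[OF LIMSEQ_inverse_real_of_nat] by (simp add: inverse_eq_divide)
  have "eventually (\<lambda>n. 1 / real (Suc n) \<le> \<epsilon>) sequentially"
    using order_tendstoD(2)[OF LIMSEQ_inverse_real_of_nat \<epsilon>]
    by eventually_elim (simp add: inverse_eq_divide)
  then have "\<forall>\<^sub>F n in sequentially. emeasure M (B \<inter> {x\<in>space M. \<epsilon> < \<bar>e n x - f x\<bar>})
      \<le> emeasure M (B - A n) + ennreal (1 / Suc n)"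
  proof eventually_elim
    case (elim n)
    have "B \<inter> {x\<in>space M. \<epsilon> < \<bar>e n x - f x\<bar>}
        \<subseteq> (B - A n) \<union> (A n \<inter> {x\<in>space M. 1 / Suc n < \<bar>e n x - f x\<bar>})"
      using elim by auto
    then have "emeasure M (B \<inter> {x\<in>space M. \<epsilon> < \<bar>e n x - f x\<bar>})
        \<le> emeasure M (B - A n) + emeasure M (A n \<inter> {x\<in>space M. 1 / Suc n < \<bar>e n x - f x\<bar>})"
      by (rule emeasure_le_add_of_subset_Un) measurable
    then show ?case
      using small[of n] by (auto intro: order_trans add_left_mono)
  qed
  then show "(\<lambda>n. emeasure M (B \<inter> {x\<in>space M. \<epsilon> < \<bar>e n x - f x\<bar>})) \<longlonglongrightarrow> 0"
  proof (rule tendsto_sandwich[of "\<lambda>n. 0", rotated])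
    show "(\<lambda>n. emeasure M (B - A n) + ennreal (1 / Suc n)) \<longlonglongrightarrow> 0"
      using tendsto_add[OF outside inverse] by simp
  qed simp_all
qed

lemma (in sigma_finite_measure) approximating_units_of_locally_approximable:
  assumes "unit_locally_approximable M E"
  shows "\<exists>e. approximating_units M E e"
proof -
  obtain A :: "nat \<Rightarrow> 'a set" where A: "range A \<subseteq> sets M" "(\<Union>i. A i) = space M"
    "\<And>i. emeasure M (A i) \<noteq> \<infinity>" "incseq A"
    using sigma_finite_incseq by blast
  have "\<forall>m. \<exists>e. e \<in> modular_space M E \<and> (\<forall>x\<in>space M. 0 \<le> e x \<and> e x \<le> 1)
      \<and> luxemburg E e \<le> 1 / Suc m
      \<and> emeasure M (A m \<inter> {x\<in>space M. 1 / Suc m < \<bar>e x - 1\<bar>}) \<le> ennreal (1 / Suc m)"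
    using assms A(1,3) unfolding unit_locally_approximable_def by (simp add: less_top Bex_def)
  then obtain e where "\<forall>m. e m \<in> modular_space M E \<and> (\<forall>x\<in>space M. 0 \<le> e m x \<and> e m x \<le> 1)
      \<and> luxemburg E (e m) \<le> 1 / Suc m
      \<and> emeasure M (A m \<inter> {x\<in>space M. 1 / Suc m < \<bar>e m x - 1\<bar>}) \<le> ennreal (1 / Suc m)"
    by (auto dest: choice)
  then have e: "\<And>m. e m \<in> modular_space M E" "\<And>m. \<forall>x\<in>space M. 0 \<le> e m x \<and> e m x \<le> 1"
    "\<And>m. luxemburg E (e m) \<le> 1 / Suc m"
    "\<And>m. emeasure M (A m \<inter> {x\<in>space M. 1 / Suc m < \<bar>e m x - 1\<bar>}) \<le> ennreal (1 / Suc m)"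
    by simp_all
  have "conv_loc_meas M e (\<lambda>x. 1)"
    using e(1,4) by (intro conv_loc_meas_of_exhaustion[OF A]) (auto simp: modular_space_def L2_def)
  moreover have "(\<lambda>n. luxemburg E (e n)) \<longlonglongrightarrow> 0"
  proof (rule tendsto_sandwich[of "\<lambda>n. 0" _ _ "\<lambda>n. 1 / real (Suc n)"])
    show "\<forall>\<^sub>F n in sequentially. 0 \<le> luxemburg E (e n)"
      using luxemburg_nonneg_modular[OF e(1)] by simp
    show "\<forall>\<^sub>F n in sequentially. luxemburg E (e n) \<le> 1 / real (Suc n)"
      using e(3) by simp
    show "(\<lambda>n. 1 / real (Suc n)) \<longlonglongrightarrow> 0"
      using LIMSEQ_inverse_real_of_nat by (simp add: inverse_eq_divide)
  qed simp
  ultimately show ?thesis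
    using e(1,2) unfolding approximating_units_def by blast
qed

section \<open>The extended form\<close>

lemma conv_loc_meas_cmult:
  assumes "conv_loc_meas M fs f" and c: "0 < c"
  shows "conv_loc_meas M (\<lambda>n x. c * fs n x) (\<lambda>x. c * f x)"
  unfolding conv_loc_meas_def
proof (intro ballI impI allI)
  fix A \<epsilon> assume "A \<in> sets M" "emeasure M A < \<infinity>" "(0::real) < \<epsilon>"
  moreover have "{x\<in>space M. \<epsilon> < \<bar>c * fs n x - c * f x\<bar>} = {x\<in>space M. \<epsilon> / c < \<bar>fs n x - f x\<bar>}" for n
  proof -
    have "\<bar>c * fs n x - c * f x\<bar> = \<bar>fs n x - f x\<bar> * c" for x
      using c by (simp add: right_diff_distrib[symmetric] abs_mult)
    then show ?thesis using c by (simp add: pos_divide_less_eq)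
  qed
  ultimately show "(\<lambda>n. emeasure M (A \<inter> {x\<in>space M. \<epsilon> < \<bar>c * fs n x - c * f x\<bar>})) \<longlonglongrightarrow> 0"
    using assms c unfolding conv_loc_meas_def by simp
qed

lemma obtain_approximant_of_E_e_less:
  fixes \<delta> :: real
  assumes "E_e M E g < b" and A: "A \<in> sets M" "emeasure M A < \<infinity>" and \<eta>: "0 < \<eta>" and \<delta>: "0 < \<delta>"
  obtains w where "L2 M w" "E w < b" "emeasure M (A \<inter> {x\<in>space M. \<eta> < \<bar>w x - g x\<bar>}) < ennreal \<delta>"
proof -
  obtain fs where "conv_loc_meas M fs g" and "liminf (\<lambda>n. E_ext M E (fs n)) < b"
    using assms(1) unfolding E_e_def by (auto simp: INF_less_iff)
  have "frequently (\<lambda>n. E_ext M E (fs n) < b) sequentially"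
  proof (rule ccontr)
    assume "\<not> frequently (\<lambda>n. E_ext M E (fs n) < b) sequentially"
    then have "b \<le> liminf (\<lambda>n. E_ext M E (fs n))"
      by (intro Liminf_bounded) (simp add: not_frequently not_less)
    then show False using \<open>liminf (\<lambda>n. E_ext M E (fs n)) < b\<close> by simp
  qed
  moreover have "eventually (\<lambda>n. emeasure M (A \<inter> {x\<in>space M. \<eta> < \<bar>fs n x - g x\<bar>}) < ennreal \<delta>) sequentially"
    using \<open>conv_loc_meas M fs g\<close> A \<eta> \<delta> unfolding conv_loc_meas_def
    by (intro order_tendstoD(2)) auto
  ultimately obtain n where "E_ext M E (fs n) < b"
    and "emeasure M (A \<inter> {x\<in>space M. \<eta> < \<bar>fs n x - g x\<bar>}) < ennreal \<delta>"
    using frequently_ex[OF frequently_eventually_frequently] by blast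
  then show ?thesis
    by (intro that[of "fs n"]) (auto simp: E_ext_def split: if_splits)
qed

context nonlinear_dirichlet
begin

lemma E_e_constant_of_approximating_units:
  assumes e: "approximating_units M E e" and c: "0 < c"
  shows "E_e M E (\<lambda>x. c) = 0"
proof -
  have e_mod: "\<And>n. e n \<in> modular_space M E" and L: "\<And>n. L2 M (e n)"
    and lux: "(\<lambda>n. luxemburg E (e n)) \<longlonglongrightarrow> 0"
    using e by (auto simp: approximating_units_def modular_space_def)
  have "conv_loc_meas M (\<lambda>n x. c * e n x) (\<lambda>x. c * 1)"
    using e c by (intro conv_loc_meas_cmult) (auto simp: approximating_units_def)
  then have "E_e M E (\<lambda>x. c) \<le> liminf (\<lambda>n. E_ext M E (\<lambda>x. c * e n x))"
    unfolding E_e_def using L2_borel_measurable[OF L2_cmult[OF L]] by (intro INF_lower) auto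
  also have "\<dots> = liminf (\<lambda>n. E (\<lambda>x. c * e n x))"
    by (simp add: E_ext_def L2_cmult[OF L])
  also have "\<dots> = 0"
    by (intro lim_imp_Liminf energy_tendsto_zero_of_luxemburg[OF e_mod lux c]) simp
  finally show ?thesis by simp
qed

lemma unit_E_e_of_approximating_units:
  assumes e: "approximating_units M E e"
  shows "(\<lambda>x. 1) \<in> modular_space_e M E" and "luxemburg (E_e M E) (\<lambda>x. 1) = 0"
proof -
  have "\<forall>\<^sub>F t in at_right (0::real). E_e M E (\<lambda>x. t * 1) = 0"
    using E_e_constant_of_approximating_units[OF e]
    by (auto simp: eventually_at_right_field intro!: exI[of _ 1])
  then show "(\<lambda>x. 1) \<in> modular_space_e M E"
    unfolding modular_space_e_def by (auto intro: tendsto_eventually)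
  have "{s. 0 < s \<and> E_e M E (\<lambda>x. 1 / s) \<le> 1} = {0::real<..}"
    using E_e_constant_of_approximating_units[OF e] by auto
  then show "luxemburg (E_e M E) (\<lambda>x. 1) = 0"
    unfolding luxemburg_def by simp
qed

lemma unit_locally_approximable_of_unit_E_e:
  assumes mod: "(\<lambda>x. 1) \<in> modular_space_e M E" and lux: "luxemburg (E_e M E) (\<lambda>x. 1) = 0"
  shows "unit_locally_approximable M E"
  unfolding unit_locally_approximable_def
proof (intro ballI impI allI)
  fix A \<epsilon> assume A: "A \<in> sets M" "emeasure M A < \<infinity>" and \<epsilon>: "(0::real) < \<epsilon>"
  have "\<exists>s>0. E_e M E (\<lambda>x. 1 / s) \<le> 1"
    using mod by (intro unit_ball_of_modular) (simp add: modular_space_e_def)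
  then obtain s where s: "0 < s" "s < min 1 \<epsilon> / 2" "E_e M E (\<lambda>x. 1 / s) \<le> 1"
    using luxemburg_less_imp[of "E_e M E" "\<lambda>x. 1" "min 1 \<epsilon> / 2"] lux \<epsilon> by auto
  define c where "c = 1 / s"
  have c: "0 < c" "2 / c < \<epsilon>" unfolding c_def using s by (auto simp: field_simps)
  have "E_e M E (\<lambda>x. c) < 2"
    using s(3) unfolding c_def by (simp add: le_less_trans)
  moreover have "0 < c * \<epsilon>" using c \<epsilon> by simp
  ultimately obtain w where w: "L2 M w" "E w < 2"
    and close: "emeasure M (A \<inter> {x\<in>space M. c * \<epsilon> < \<bar>w x - c\<bar>}) < \<epsilon>"
    using obtain_approximant_of_E_e_less[OF _ A _ \<epsilon>] by blast
  have "E (\<lambda>x. max 0 (min (w x) c)) \<le> E w"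
    using c L2_borel_measurable[OF w(1)]
    by (intro E_normal_contraction[OF w(1)]) (auto simp: max_def min_def abs_if)
  then have energy: "E (\<lambda>x. max 0 (min (w x) c)) \<le> ennreal 2"
    using w(2) by simp
  have [measurable]: "A \<in> sets M" "w \<in> borel_measurable M"
    using A(1) L2_borel_measurable[OF w(1)] .
  define e where "e = (\<lambda>x. max 0 (min (w x) c) / c)"
  have e: "e \<in> modular_space M E" "\<And>x. 0 \<le> e x \<and> e x \<le> 1" "luxemburg E e \<le> 2 / c"
    "\<And>x \<delta>. 0 \<le> \<delta> \<Longrightarrow> \<delta> < \<bar>e x - 1\<bar> \<Longrightarrow> w x < c * (1 - \<delta>)"
    unfolding e_def using normalized_truncation[OF w(1) c(1) _ energy] by auto
  have "A \<inter> {x\<in>space M. \<epsilon> < \<bar>e x - 1\<bar>} \<subseteq> A \<inter> {x\<in>space M. c * \<epsilon> < \<bar>w x - c\<bar>}"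
  proof safe
    fix x assume "\<epsilon> < \<bar>e x - 1\<bar>"
    then have "c * \<epsilon> < c - w x" using e(4)[of \<epsilon> x] \<epsilon> by (simp add: algebra_simps)
    then show "c * \<epsilon> < \<bar>w x - c\<bar>" by linarith
  qed
  then have "emeasure M (A \<inter> {x\<in>space M. \<epsilon> < \<bar>e x - 1\<bar>})
      \<le> emeasure M (A \<inter> {x\<in>space M. c * \<epsilon> < \<bar>w x - c\<bar>})"
    by (rule emeasure_mono) measurable
  also have "\<dots> \<le> ennreal \<epsilon>"
    using close by simp
  finally have "emeasure M (A \<inter> {x\<in>space M. \<epsilon> < \<bar>e x - 1\<bar>}) \<le> ennreal \<epsilon>" .
  moreover have "luxemburg E e \<le> \<epsilon>"
    using e(3) c by simp
  ultimately show "\<exists>e\<in>modular_space M E. (\<forall>x\<in>space M. 0 \<le> e x \<and> e x \<le> 1) \<and>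
      luxemburg E e \<le> \<epsilon> \<and> emeasure M (A \<inter> {x\<in>space M. \<epsilon> < \<bar>e x - 1\<bar>}) \<le> ennreal \<epsilon>"
    using e(1,2) by blast
qed

end

section \<open>Criticality\<close>

context nonlinear_dirichlet
begin

lemma resolvent_truncated_le_green:
  assumes f1: "L2 M (\<lambda>y. min (f y) 1)" and f_nonneg: "\<And>x. x \<in> space M \<Longrightarrow> 0 \<le> f x"
  shows "AE x in M. \<forall>j. ereal (resolvent M E (1 / Suc j) (\<lambda>y. min (f y) 1) x) \<le> green M E f x"
proof -
  define h where "h = (\<lambda>k. resolvent M E (1 / Suc k) (\<lambda>y. min (f y) 1))"
  have min: "resolvent_minimizer (1 / Suc k) (\<lambda>y. min (f y) 1) (h k)" for k
    unfolding h_def by (rule resolvent_minimizer_resolvent[OF _ f1]) simp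
  have "AE x in M. h k x \<le> h (Suc k) x" for k
    by (rule resolvent_minimizer_antitone[OF min min _ _ f1]) (auto simp: f_nonneg frac_less2)
  then have "AE x in M. \<forall>k. h k x \<le> h (Suc k) x"
    by (simp add: AE_all_countable)
  then show ?thesis
  proof eventually_elim
    case (elim x)
    show ?case
    proof
      fix j
      have "ereal (h j x) \<le> liminf (\<lambda>k. ereal (h k x))"
        using incseq_SucI[of "\<lambda>k. h k x"] elim
        by (intro Liminf_bounded eventually_sequentiallyI[of j]) (simp add: incseq_def)
      also have "\<dots> \<le> green M E f x"
        unfolding green_def resolvent_pos_def h_def
        by (intro Liminf_mono always_eventually allI order_trans[OF _ SUP_upper[of 1]]) simp_all
      finally show "ereal (resolvent M E (1 / Suc j) (\<lambda>y. min (f y) 1) x) \<le> green M E f x"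
        unfolding h_def .
    qed
  qed
qed

lemma measure_le_energy_of_bounded_resolvents:
  assumes h: "\<And>k. resolvent_minimizer (\<alpha> k) f (h k)" "\<And>k. 0 < \<alpha> k" and \<alpha>: "\<alpha> \<longlonglongrightarrow> 0"
    and f: "L2 M f" and f_nonneg: "\<And>x. x \<in> space M \<Longrightarrow> 0 \<le> f x" and u: "L2 M u"
    and [measurable]: "B \<in> sets M" and bounded: "\<And>x k. x \<in> B \<Longrightarrow> \<delta> \<le> f x \<and> h k x \<le> N"
    and \<delta>: "0 \<le> \<delta>" and t: "0 \<le> t"
  shows "ennreal (\<delta> * t) * emeasure M (B \<inter> {x\<in>space M. N + t \<le> u x}) \<le> E u"
proof -
  have [measurable]: "u \<in> borel_measurable M" using u by (rule L2_borel_measurable)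
  have "ennreal (\<delta> * t) * emeasure M (B \<inter> {x\<in>space M. N + t \<le> u x})
      \<le> E u + ennreal (\<alpha> k / 2 * (\<integral>x. (u x)\<^sup>2 \<partial>M))" for k
  proof -
    have "ennreal (\<delta> * t) * emeasure M (B \<inter> {x\<in>space M. N + t \<le> u x})
        = (\<integral>\<^sup>+x. ennreal (\<delta> * t) * indicator (B \<inter> {x\<in>space M. N + t \<le> u x}) x \<partial>M)"
      by (rule nn_integral_cmult_indicator[symmetric]) measurable
    also have "\<dots> \<le> (\<integral>\<^sup>+x. ennreal (f x * max (u x - h k x) 0) \<partial>M)"
    proof (rule nn_integral_mono)
      fix x assume "x \<in> space M"
      have "\<delta> * t \<le> f x * max (u x - h k x) 0" if "x \<in> B" "N + t \<le> u x"
        using bounded[OF that(1), of k] that(2) \<delta> t by (intro mult_mono) auto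
      then show "ennreal (\<delta> * t) * indicator (B \<inter> {x\<in>space M. N + t \<le> u x}) x
          \<le> ennreal (f x * max (u x - h k x) 0)"
        by (auto simp: indicator_def intro: ennreal_leI)
    qed
    also have "\<dots> = ennreal (\<integral>x. f x * max (u x - h k x) 0 \<partial>M)"
      using f_nonneg L2_integrable_mult[OF f L2_max[OF L2_diff[OF u resolvent_minimizer_L2[OF h(1)]] L2_zero]]
      by (intro nn_integral_eq_integral) auto
    also have "\<dots> \<le> E u + ennreal (\<alpha> k / 2 * (\<integral>x. (u x)\<^sup>2 \<partial>M))"
      by (rule resolvent_minimizer_test_inequality[OF h f u])
    finally show ?thesis .
  qed
  moreover have "(\<lambda>k. E u + ennreal (\<alpha> k / 2 * (\<integral>x. (u x)\<^sup>2 \<partial>M))) \<longlonglongrightarrow> E u + ennreal (0 / 2 * (\<integral>x. (u x)\<^sup>2 \<partial>M))"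
    by (intro tendsto_intros tendsto_ennrealI \<alpha>) auto
  ultimately show ?thesis
    by (intro LIMSEQ_le_const[of _ "E u"]) auto
qed

text \<open>Along approximating units \<open>e\<^sub>m\<close> the energies \<open>E (c e\<^sub>m)\<close> vanish, while \<open>c e\<^sub>m\<close>
  exceeds the bound on the resolvents on most of \<open>B\<close>; so the estimate
  \<open>measure_le_energy_of_bounded_resolvents\<close> forces \<open>B\<close> to be null.\<close>

lemma null_set_of_bounded_resolvents:
  assumes e: "approximating_units M E e"
    and h: "\<And>k. resolvent_minimizer (\<alpha> k) f (h k)" "\<And>k. 0 < \<alpha> k" "\<alpha> \<longlonglongrightarrow> 0"
    and f: "L2 M f" "\<And>x. x \<in> space M \<Longrightarrow> 0 \<le> f x"
    and B [measurable]: "B \<in> sets M" and B_fin: "emeasure M B < \<infinity>"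
    and bounded: "\<And>x k. x \<in> B \<Longrightarrow> \<delta> \<le> f x \<and> h k x \<le> N" and \<delta>: "0 < \<delta>"
  shows "emeasure M B = 0"
proof -
  have e_mod: "\<And>m. e m \<in> modular_space M E" and conv: "conv_loc_meas M e (\<lambda>x. 1)"
    and lux: "(\<lambda>m. luxemburg E (e m)) \<longlonglongrightarrow> 0"
    using e by (auto simp: approximating_units_def)
  have L: "L2 M (e m)" for m using e_mod by (simp add: modular_space_def)
  have [measurable]: "e m \<in> borel_measurable M" for m using L2_borel_measurable[OF L] .
  define t where "t = \<bar>N\<bar> + 1"
  define c where "c = 4 * t"
  define K where "K = ennreal (\<delta> * t)"
  have t: "0 < t" and c: "0 < c" unfolding c_def t_def by auto
  have bound: "K * emeasure M B
      \<le> E (\<lambda>x. c * e m x) + K * emeasure M (B \<inter> {x\<in>space M. 1 / 4 < \<bar>e m x - 1\<bar>})" for m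
  proof -
    have "N < 2 * t" unfolding t_def by (simp add: abs_if)
    then have "1 / 4 < \<bar>e m x - 1\<bar>" if "\<not> N + t \<le> c * e m x" for x
      using quarter_deviation_of_less[OF t] that unfolding c_def by (simp add: not_le)
    then have "B \<subseteq> (B \<inter> {x\<in>space M. N + t \<le> c * e m x}) \<union> (B \<inter> {x\<in>space M. 1 / 4 < \<bar>e m x - 1\<bar>})"
      using sets.sets_into_space[OF B] by auto
    then have "emeasure M B \<le> emeasure M (B \<inter> {x\<in>space M. N + t \<le> c * e m x})
        + emeasure M (B \<inter> {x\<in>space M. 1 / 4 < \<bar>e m x - 1\<bar>})"
      by (rule emeasure_le_add_of_subset_Un) measurable
    then have "K * emeasure M B \<le> K * emeasure M (B \<inter> {x\<in>space M. N + t \<le> c * e m x})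
        + K * emeasure M (B \<inter> {x\<in>space M. 1 / 4 < \<bar>e m x - 1\<bar>})"
      using mult_left_mono[of _ _ K] by (simp add: distrib_left[symmetric])
    also have "\<dots> \<le> E (\<lambda>x. c * e m x) + K * emeasure M (B \<inter> {x\<in>space M. 1 / 4 < \<bar>e m x - 1\<bar>})"
      unfolding K_def using \<delta> t
      by (intro add_right_mono measure_le_energy_of_bounded_resolvents[OF h f L2_cmult[OF L]] bounded)
        auto
    finally show ?thesis .
  qed
  have lim: "(\<lambda>m. E (\<lambda>x. c * e m x) + K * emeasure M (B \<inter> {x\<in>space M. 1 / 4 < \<bar>e m x - 1\<bar>}))
      \<longlonglongrightarrow> 0 + K * 0"
  proof (intro tendsto_add energy_tendsto_zero_of_luxemburg[OF e_mod lux c] ennreal_tendsto_cmult)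
    show "(\<lambda>m. emeasure M (B \<inter> {x\<in>space M. 1 / 4 < \<bar>e m x - 1\<bar>})) \<longlonglongrightarrow> 0"
      by (rule conv[unfolded conv_loc_meas_def, rule_format]) (use B B_fin in auto)
  qed (simp add: K_def)
  have "K * emeasure M B \<le> 0 + K * 0"
    by (rule LIMSEQ_le_const[OF lim]) (use bound in blast)
  then show ?thesis
    using mult_pos_pos[OF \<delta> t] by (auto simp: K_def ennreal_eq_0_iff)
qed

lemma resolvents_unbounded_of_approximating_units:
  assumes e: "approximating_units M E e" and [measurable]: "f \<in> borel_measurable M"
    and fi: "integrable M f" and f_nonneg: "\<And>x. x \<in> space M \<Longrightarrow> 0 \<le> f x"
  shows "AE x in M. 0 < f x \<longrightarrow> (\<forall>N. \<exists>k. real N < resolvent M E (1 / Suc k) (\<lambda>y. min (f y) 1) x)"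
proof -
  define f1 where "f1 = (\<lambda>y. min (f y) 1)"
  have f1: "L2 M f1"
    unfolding f1_def using f_nonneg by (intro L2_of_integrable_bounded[OF _ fi]) auto
  have f1_nonneg: "\<And>x. x \<in> space M \<Longrightarrow> 0 \<le> f1 x"
    unfolding f1_def using f_nonneg by simp
  define h where "h = (\<lambda>k. resolvent M E (1 / Suc k) f1)"
  have h: "resolvent_minimizer (1 / Suc k) f1 (h k)" for k
    unfolding h_def by (rule resolvent_minimizer_resolvent[OF _ f1]) simp
  have [measurable]: "h k \<in> borel_measurable M" for k
    using L2_borel_measurable[OF resolvent_minimizer_L2[OF h]] .
  define B where "B = (\<lambda>N j. {x\<in>space M. 1 / real (Suc j) < f x \<and> (\<forall>k. h k x \<le> real N)})"
  have B_sets [measurable]: "B N j \<in> sets M" for N j unfolding B_def by measurable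
  have "emeasure M (B N j) = 0" for N j
  proof (rule null_set_of_bounded_resolvents[OF e h _ _ f1 f1_nonneg])
    show "(\<lambda>k. 1 / real (Suc k)) \<longlonglongrightarrow> 0"
      using LIMSEQ_inverse_real_of_nat by (simp add: inverse_eq_divide)
    have "B N j \<subseteq> {x\<in>space M. 1 / real (Suc j) \<le> f x}"
      unfolding B_def by auto
    then have "emeasure M (B N j) \<le> emeasure M {x\<in>space M. 1 / real (Suc j) \<le> f x}"
      by (rule emeasure_mono) measurable
    also have "\<dots> \<le> ennreal (1 / (1 / real (Suc j)) * (\<integral>x. f x \<partial>M))"
      using f_nonneg by (intro integral_Markov_inequality fi) auto
    finally show "emeasure M (B N j) < \<infinity>"
      by (rule le_less_trans) simp
    show "1 / real (Suc j) \<le> f1 x \<and> h k x \<le> real N" if "x \<in> B N j" for x k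
      using that unfolding B_def f1_def by auto
  qed auto
  then have "AE x in M. \<forall>N j. x \<notin> B N j"
    by (simp add: AE_all_countable) (auto intro!: AE_not_in null_setsI B_sets)
  moreover have "AE x in M. x \<in> space M"
    by (rule AE_space)
  ultimately show ?thesis
  proof eventually_elim
    case (elim x)
    show ?case
    proof (intro impI allI)
      fix N assume "0 < f x"
      then obtain j where "1 / real (Suc j) < f x"
        using reals_Archimedean by (auto simp: inverse_eq_divide)
      then have "\<not> (\<forall>k. h k x \<le> real N)"
        using elim unfolding B_def by auto
      then show "\<exists>k. real N < resolvent M E (1 / Suc k) (\<lambda>y. min (f y) 1) x"
        unfolding h_def f1_def by (auto simp: not_le)
    qed
  qed
qed

lemma critical_of_approximating_units:
  assumes e: "approximating_units M E e"
  shows "critical M E"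
  unfolding critical_def
proof (intro allI impI)
  fix f :: "'a \<Rightarrow> real"
  assume "f \<in> borel_measurable M \<and> integrable M f \<and> (\<forall>x\<in>space M. 0 \<le> f x)"
  then have f_meas [measurable]: "f \<in> borel_measurable M" and fi: "integrable M f"
    and f_nonneg: "\<And>x. x \<in> space M \<Longrightarrow> 0 \<le> f x" by auto
  have "AE x in M. 0 < f x \<longrightarrow> (\<forall>N. \<exists>k. real N < resolvent M E (1 / Suc k) (\<lambda>y. min (f y) 1) x)"
    by (rule resolvents_unbounded_of_approximating_units[OF e f_meas fi]) (rule f_nonneg)
  moreover have "L2 M (\<lambda>y. min (f y) 1)"
    using f_nonneg by (intro L2_of_integrable_bounded[OF _ fi]) auto
  then have "AE x in M. \<forall>j. ereal (resolvent M E (1 / Suc j) (\<lambda>y. min (f y) 1) x) \<le> green M E f x"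
    by (rule resolvent_truncated_le_green) (rule f_nonneg)
  ultimately show "AE x in M. \<not> (0 < f x \<and> green M E f x < \<infinity>)"
  proof eventually_elim
    case (elim x)
    show ?case
    proof
      assume fx: "0 < f x \<and> green M E f x < \<infinity>"
      obtain g where g: "green M E f x = ereal g"
        using fx elim(2)[rule_format, of 0] by (cases "green M E f x") auto
      obtain N :: nat where "g < real N" using reals_Archimedean2 by blast
      moreover obtain k where "real N < resolvent M E (1 / Suc k) (\<lambda>y. min (f y) 1) x"
        using elim(1) fx by blast
      ultimately show False
        using elim(2)[rule_format, of k] g by simp
    qed
  qed
qed

end

lemma resolvent_pos_unit_bounded:
  assumes f: "\<And>y. 0 \<le> f y" "\<And>y. f y \<le> 1"
  shows "resolvent_pos M E \<alpha> f x
    = max (ereal (resolvent M E \<alpha> (\<lambda>y. 0) x)) (ereal (resolvent M E \<alpha> f x))"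
proof -
  have truncate: "(\<lambda>y. min (f y) (real n)) = (if n = 0 then (\<lambda>y. 0) else f)" for n
  proof (cases n)
    case 0
    then show ?thesis using f(1) by (auto intro!: ext simp: min_def intro: antisym)
  next
    case (Suc m)
    then have "f y \<le> real n" for y using f(2)[of y] by simp
    then show ?thesis using Suc by (auto intro!: ext simp: min_def)
  qed
  have "range (\<lambda>n. ereal (resolvent M E \<alpha> (\<lambda>y. min (f y) (real n)) x))
      = {ereal (resolvent M E \<alpha> (\<lambda>y. 0) x), ereal (resolvent M E \<alpha> f x)}"
    unfolding truncate by (auto simp: image_iff intro: exI[of _ 0] exI[of _ 1])
  then show ?thesis
    unfolding resolvent_pos_def by (simp add: sup_max)
qed

lemma AE_eventually_imp_measure_tendsto_zero:
  assumes ev: "AE x in M. eventually (\<lambda>k. P k x) sequentially"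
    and [measurable]: "\<And>k. Measurable.pred M (P k)" "A \<in> sets M"
    and A: "emeasure M A < \<infinity>"
  shows "(\<lambda>k. emeasure M (A \<inter> {x\<in>space M. \<not> P k x})) \<longlonglongrightarrow> 0"
proof -
  define T where "T = (\<lambda>k. A \<inter> {x\<in>space M. \<exists>k'\<ge>k. \<not> P k' x})"
  have [measurable]: "T k \<in> sets M" for k unfolding T_def by measurable
  have "(\<lambda>k. emeasure M (T k)) \<longlonglongrightarrow> emeasure M (\<Inter>k. T k)"
  proof (rule Lim_emeasure_decseq)
    show "decseq T" unfolding T_def decseq_def by (auto intro: order_trans)
    show "emeasure M (T k) \<noteq> \<infinity>" for k
      using A emeasure_mono[of "T k" A M] unfolding T_def by (auto simp: top_unique)
  qed auto
  moreover have "AE x in M. x \<notin> (\<Inter>k. T k)"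
    using ev by eventually_elim (auto simp: T_def eventually_sequentially)
  then have "(\<Inter>k. T k) \<in> null_sets M"
    using AE_iff_null_sets[of "\<Inter>k. T k" M] by simp
  ultimately have lim: "(\<lambda>k. emeasure M (T k)) \<longlonglongrightarrow> 0"
    by (simp add: null_setsD1)
  have "emeasure M (A \<inter> {x\<in>space M. \<not> P k x}) \<le> emeasure M (T k)" for k
  proof (rule emeasure_mono)
    show "A \<inter> {x\<in>space M. \<not> P k x} \<subseteq> T k" unfolding T_def by auto
  qed measurable
  then show ?thesis
    by (intro tendsto_sandwich[OF _ _ tendsto_const lim]) auto
qed

lemma (in sigma_finite_measure) obtain_small_positive_integrable:
  assumes c: "1 \<le> c"
  obtains f :: "'a \<Rightarrow> real" where "f \<in> borel_measurable M" "integrable M f"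
    "\<And>x. 0 < f x" "\<And>x. f x \<le> 1" "c * (\<integral>x. f x \<partial>M) \<le> 1"
proof -
  obtain g :: "'a \<Rightarrow> real" where g: "g \<in> borel_measurable M" "\<And>x. 0 < g x" "\<And>x. g x \<le> 1"
    "integrable M g"
    using obtain_positive_integrable_function by metis
  define G where "G = (\<integral>x. g x \<partial>M)"
  have G: "0 \<le> G" unfolding G_def using g(2) by (simp add: less_imp_le)
  have cG: "1 \<le> c * (G + 1)" using mult_mono[of 1 c 1 "G + 1"] c G by simp
  show ?thesis
  proof
    show "(\<lambda>x. g x / (c * (G + 1))) \<in> borel_measurable M" "integrable M (\<lambda>x. g x / (c * (G + 1)))"
      using g(1,4) by auto
    show "0 < g x / (c * (G + 1))" "g x / (c * (G + 1)) \<le> 1" for x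
      using g(2,3)[of x] cG by simp_all
    have "c * (\<integral>x. g x / (c * (G + 1)) \<partial>M) = G / (G + 1)"
      unfolding G_def using c G_def G by simp
    then show "c * (\<integral>x. g x / (c * (G + 1)) \<partial>M) \<le> 1"
      using G by simp
  qed
qed

context nonlinear_dirichlet
begin

lemma critical_resolvent_tendsto_infinity:
  assumes crit: "critical M E" and [measurable]: "f \<in> borel_measurable M"
    and fi: "integrable M f" and f: "\<And>y. 0 < f y" "\<And>y. f y \<le> 1"
  shows "AE x in M. filterlim (\<lambda>k. resolvent M E (1 / Suc k) f x) at_top sequentially"
proof -
  have Lf: "L2 M f"
    using f by (intro L2_of_integrable_bounded[OF _ fi]) (auto simp: less_imp_le)
  have "AE x in M. green M E f x = \<infinity>"
    using crit fi f unfolding critical_def by (auto simp: less_imp_le less_top elim!: AE_mp)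
  moreover have "AE x in M. \<forall>k. resolvent M E (1 / Suc k) (\<lambda>y. 0) x = 0"
    unfolding AE_all_countable
    by (intro allI resolvent_minimizer_zero[OF resolvent_minimizer_resolvent[OF _ L2_zero]]) auto
  moreover have "AE x in M. \<forall>k. 0 \<le> resolvent M E (1 / Suc k) f x"
    unfolding AE_all_countable
    by (intro allI resolvent_minimizer_nonneg[OF resolvent_minimizer_resolvent[OF _ Lf] _ Lf])
      (auto simp: f less_imp_le)
  ultimately show ?thesis
  proof eventually_elim
    case (elim x)
    have "green M E f x = liminf (\<lambda>k. ereal (resolvent M E (1 / Suc k) f x))"
      unfolding green_def resolvent_pos_unit_bounded[OF less_imp_le[OF f(1)] f(2)]
      using elim(2,3) by (simp add: max_def)
    then have "(\<lambda>k. ereal (resolvent M E (1 / Suc k) f x)) \<longlonglongrightarrow> \<infinity>"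
      using elim(1) by (simp add: liminf_PInfty)
    then show ?case
      by (simp add: tendsto_PInfty_eq_at_top)
  qed
qed

lemma unit_locally_approximable_of_critical:
  assumes crit: "critical M E"
  shows "unit_locally_approximable M E"
  unfolding unit_locally_approximable_def
proof (intro ballI impI allI)
  fix A \<epsilon> assume A [measurable]: "A \<in> sets M" and A_fin: "emeasure M A < \<infinity>" and \<epsilon>: "(0::real) < \<epsilon>"
  define c where "c = max 1 (1 / \<epsilon>)"
  have c: "1 \<le> c" "1 / c \<le> \<epsilon>" unfolding c_def using \<epsilon> by (auto simp: field_simps max_def)
  obtain f where [measurable]: "f \<in> borel_measurable M" and fi: "integrable M f"
    and f_pos: "\<And>x. 0 < f x" and f_le: "\<And>x. f x \<le> 1" and cf: "c * (\<integral>x. f x \<partial>M) \<le> 1"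
    using obtain_small_positive_integrable[OF c(1)] by metis
  have Lf: "L2 M f"
    using f_pos f_le by (intro L2_of_integrable_bounded[OF _ fi]) (auto simp: less_imp_le)
  define h where "h = (\<lambda>k. resolvent M E (1 / Suc k) f)"
  have h: "resolvent_minimizer (1 / Suc k) f (h k)" for k
    unfolding h_def by (rule resolvent_minimizer_resolvent[OF _ Lf]) simp
  have [measurable]: "h k \<in> borel_measurable M" for k
    using L2_borel_measurable[OF resolvent_minimizer_L2[OF h]] .
  have "AE x in M. eventually (\<lambda>k. c \<le> h k x) sequentially"
    using critical_resolvent_tendsto_infinity[OF crit _ fi f_pos f_le]
    unfolding h_def by (auto simp: filterlim_at_top elim!: AE_mp)
  then have "(\<lambda>k. emeasure M (A \<inter> {x\<in>space M. \<not> c \<le> h k x})) \<longlonglongrightarrow> 0"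
    using A_fin by (intro AE_eventually_imp_measure_tendsto_zero) auto
  then have "eventually (\<lambda>k. emeasure M (A \<inter> {x\<in>space M. \<not> c \<le> h k x}) < ennreal \<epsilon>) sequentially"
    using \<epsilon> by (intro order_tendstoD(2)) auto
  then obtain k where k: "emeasure M (A \<inter> {x\<in>space M. \<not> c \<le> h k x}) < ennreal \<epsilon>"
    using eventually_happens'[OF sequentially_bot] by blast
  have "L2 M (\<lambda>x. min (h k x) c)"
    using c by (intro L2_dominated[OF _ resolvent_minimizer_L2[OF h]]) (auto simp: min_def)
  then have "E (\<lambda>x. max 0 (min (h k x) c)) \<le> E (\<lambda>x. min (h k x) c)"
    by (rule E_normal_contraction) (auto simp: max_def abs_if)
  also have "\<dots> \<le> ennreal (c * (\<integral>x. f x \<partial>M))"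
    using c f_pos by (intro resolvent_minimizer_truncation_energy[OF h _ Lf fi]) (auto simp: less_imp_le)
  also have "\<dots> \<le> ennreal 1"
    using cf by (rule ennreal_leI)
  finally have energy: "E (\<lambda>x. max 0 (min (h k x) c)) \<le> ennreal 1" .
  define e where "e = (\<lambda>x. max 0 (min (h k x) c) / c)"
  have e: "e \<in> modular_space M E" "\<And>x. 0 \<le> e x \<and> e x \<le> 1" "luxemburg E e \<le> 1 / c"
    "\<And>x \<delta>. 0 \<le> \<delta> \<Longrightarrow> \<delta> < \<bar>e x - 1\<bar> \<Longrightarrow> h k x < c * (1 - \<delta>)"
    unfolding e_def using c normalized_truncation[OF resolvent_minimizer_L2[OF h] _ _ energy] by auto
  have "A \<inter> {x\<in>space M. \<epsilon> < \<bar>e x - 1\<bar>} \<subseteq> A \<inter> {x\<in>space M. \<not> c \<le> h k x}"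
  proof safe
    fix x assume "\<epsilon> < \<bar>e x - 1\<bar>" "c \<le> h k x"
    then have "h k x < c - c * \<epsilon>" using e(4)[of \<epsilon> x] \<epsilon> by (simp add: algebra_simps)
    moreover have "0 < c * \<epsilon>" using \<epsilon> c by simp
    ultimately show False using \<open>c \<le> h k x\<close> by linarith
  qed
  then have "emeasure M (A \<inter> {x\<in>space M. \<epsilon> < \<bar>e x - 1\<bar>}) \<le> emeasure M (A \<inter> {x\<in>space M. \<not> c \<le> h k x})"
    by (rule emeasure_mono) measurable
  also have "\<dots> \<le> ennreal \<epsilon>" using k by simp
  finally show "\<exists>e\<in>modular_space M E. (\<forall>x\<in>space M. 0 \<le> e x \<and> e x \<le> 1) \<and>
      luxemburg E e \<le> \<epsilon> \<and> emeasure M (A \<inter> {x\<in>space M. \<epsilon> < \<bar>e x - 1\<bar>}) \<le> ennreal \<epsilon>"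
    using e(1,2,3) c by (intro bexI[of _ e]) auto
qed

end

theorem theorem4p17:
  fixes M :: "'a measure" and E :: "('a \<Rightarrow> real) \<Rightarrow> ennreal"
  assumes "sigma_finite_measure M"
    and "nonlinear_dirichlet_form M E"
    and "weak_Delta2 M E"
  shows "(critical M E
           \<longleftrightarrow> ((\<lambda>x. 1) \<in> modular_space_e M E \<and> luxemburg (E_e M E) (\<lambda>x. 1) = 0))
       \<and> (critical M E
           \<longleftrightarrow> (\<exists>e :: nat \<Rightarrow> 'a \<Rightarrow> real.
                 (\<forall>n. e n \<in> modular_space M E) \<and>
                 (\<forall>n. \<forall>x\<in>space M. 0 \<le> e n x \<and> e n x \<le> 1) \<and>
                 conv_loc_meas M e (\<lambda>x. 1) \<and>
                 (\<lambda>n. luxemburg E (e n)) \<longlonglongrightarrow> 0))"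
proof -
  interpret nonlinear_dirichlet M E
    using assms(1,2) by (intro nonlinear_dirichlet.intro nonlinear_dirichlet_axioms.intro)
  have "critical M E \<longleftrightarrow> (\<exists>e. approximating_units M E e)"
    using critical_of_approximating_units
      approximating_units_of_locally_approximable[OF unit_locally_approximable_of_critical]
    by blast
  moreover have "(\<lambda>x. 1) \<in> modular_space_e M E \<and> luxemburg (E_e M E) (\<lambda>x. 1) = 0
      \<longleftrightarrow> (\<exists>e. approximating_units M E e)"
    using unit_E_e_of_approximating_units
      approximating_units_of_locally_approximable[OF unit_locally_approximable_of_unit_E_e]
    by blast
  ultimately show ?thesis
    unfolding approximating_units_def by blast
qed

end
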